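(* Let $\mathcal B\subset\mathbb N_{\geq2}$ be a finite set with $\#\mathcal B\geq2$ and $2\in\mathcal B$. Then \[\dim_{\rm H}\{x\in F_{\mathcal B}:\mu(x)>2\}=\dim_{\rm H}F_{\mathcal B}.\]
   Context: For $x\in\mathbb R$, the irrationality exponent $\mu(x)$ is the supremum of the set of $\mu\in\mathbb R$ such that $|x-p/q|<q^{-\mu}$ holds for infinitely many $(p,q)\in\mathbb Z\times\mathbb N$ with $|p|$ and $q$ coprime. Every irrational $x$ has a unique backward continued fraction (BCF) expansion $x=b_0(x)-\cfrac{1}{b_1(x)-\cfrac{1}{b_2(x)-\cdots}}$ with $b_0(x)=\lfloor x\rfloor+1$ and integers $b_n(x)\geq2$ for $n\geq1$. For a finite $\mathcal B\subset\mathbb N_{\geq2}$, $F_{\mathcal B}=\{x\in(0,1)\setminus\mathbb Q: b_n(x)\in\mathcal B\text{ for all }n\geq1\}$. $\dim_{\rm H}$ denotes Hausdorff dimension. *)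

theory Defs
  imports "HOL-Analysis.Analysis"
begin

text \<open>For irrational x: x = b_0 - 1/x_1 with b_0 = floor x + 1 and x_1 = 1/(b_0 - x) > 1,
  iterated. bcf_tail x n is the n-th complete quotient x_n, bcf_digit x n = b_n(x).\<close>

fun bcf_tail :: "real \<Rightarrow> nat \<Rightarrow> real" where
  "bcf_tail x 0 = x"
| "bcf_tail x (Suc n) = 1 / (real_of_int (\<lfloor>bcf_tail x n\<rfloor> + 1) - bcf_tail x n)"

definition bcf_digit :: "real \<Rightarrow> nat \<Rightarrow> int" where
  "bcf_digit x n = \<lfloor>bcf_tail x n\<rfloor> + 1"

definition F_B :: "nat set \<Rightarrow> real set" where
  "F_B B = {x. 0 < x \<and> x < 1 \<and> x \<notin> \<rat> \<and> (\<forall>n\<ge>1. bcf_digit x n \<in> int ` B)}"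

definition irrat_exp :: "real \<Rightarrow> ereal" where
  "irrat_exp x = Sup {ereal m | m. infinite {(p :: int, q :: nat).
      q > 0 \<and> coprime p (int q) \<and> \<bar>x - real_of_int p / real q\<bar> < real q powr (- m)}}"

definition hausdorff_pre :: "real \<Rightarrow> real \<Rightarrow> real set \<Rightarrow> ennreal" where
  "hausdorff_pre s \<delta> A = (INF U \<in> {U :: nat \<Rightarrow> real set. A \<subseteq> (\<Union>i. U i) \<and>
      (\<forall>i. bounded (U i) \<and> diameter (U i) \<le> \<delta>)}. (\<Sum>i. ennreal (diameter (U i) powr s)))"

definition hausdorff_measure :: "real \<Rightarrow> real set \<Rightarrow> ennreal" where
  "hausdorff_measure s A = (SUP \<delta> \<in> {0<..}. hausdorff_pre s \<delta> A)"

text \<open>dim_H A = inf {s > 0. H^s(A) = 0} (the infimum over s > 0 avoids the 0^0 convention).\<close>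
definition hausdorff_dim :: "real set \<Rightarrow> real" where
  "hausdorff_dim A = Inf {s. s > 0 \<and> hausdorff_measure s A = 0}"

end

theory Submission
  imports Defs
begin

text \<open>Fix \<open>\<delta> > 0\<close>. From the digits of \<open>x \<in> F_B B\<close> build \<open>y = g x\<close> by copying them one at
  a time and, after the \<open>(n + 1)\<close>-st one, inserting a block of about \<open>q^\<delta>\<close> twos, where \<open>q\<close> is
  the denominator of the rational number whose digits are those written so far followed by
  \<open>2, 2, \<dots>\<close>. A block of \<open>L\<close> twos pushes the next complete quotient of \<open>y\<close> within \<open>1 / L\<close> of 1,
  so this rational number is within \<open>q^(-2-\<delta>)\<close> of \<open>y\<close>. Blocks are inserted infinitely often,
  hence \<open>\<mu>(y) \<ge> 2 + \<delta>\<close>, and \<open>y \<in> F_B B\<close> because \<open>2 \<in> B\<close>.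
  A block is only inserted while the product \<open>E\<close> of the factors \<open>L + 1\<close> of all earlier blocks
  stays below \<open>q^\<delta>\<close>; then the product of the complete quotients of \<open>y\<close> exceeds the
  product \<open>\<Pi>\<close> for \<open>x\<close> by at most a factor \<open>E \<le> (2 \<Pi>)^(4\<delta>)\<close>. Since the distance between
  two numbers with a common prefix of digits is governed by these products,
  \<open>|x - x'| \<le> C |g x - g x'|^(1/(1+4\<delta>))\<close>, so \<open>dim F_B B \<le> (1 + 4\<delta>) dim {\<mu> > 2}\<close>; now let \<open>\<delta> \<rightarrow> 0\<close>.\<close>

section \<open>Complete quotients\<close>

declare bcf_tail.simps(2)[simp del]

lemma bcf_tail_Suc: "bcf_tail x (Suc n) = 1 / (bcf_digit x n - bcf_tail x n)"
  unfolding bcf_digit_def by (simp add: bcf_tail.simps)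

lemma bcf_tail_not_Rats:
  assumes "x \<notin> \<rat>" shows "bcf_tail x n \<notin> \<rat>"
proof (induction n)
  case (Suc n)
  let ?d = "real_of_int (bcf_digit x n) - bcf_tail x n"
  have "?d \<notin> \<rat>"
  proof
    assume "?d \<in> \<rat>"
    from Rats_diff[OF Rats_of_int this, of "bcf_digit x n"] Suc show False by simp
  qed
  then show ?case
    unfolding bcf_tail_Suc by (metis Rats_inverse inverse_eq_divide inverse_inverse_eq)
qed (use assms in simp)

lemma bcf_digit_bounds:
  assumes "x \<notin> \<rat>"
  shows "bcf_digit x n - 1 < bcf_tail x n" "bcf_tail x n < bcf_digit x n"
proof -
  have "bcf_tail x n \<noteq> of_int \<lfloor>bcf_tail x n\<rfloor>"
    using bcf_tail_not_Rats[OF assms, of n] by (metis Rats_of_int)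
  then show "bcf_digit x n - 1 < bcf_tail x n"
    unfolding bcf_digit_def using of_int_floor_le[of "bcf_tail x n"] by linarith
  show "bcf_tail x n < bcf_digit x n" unfolding bcf_digit_def by linarith
qed

lemma bcf_tail_Suc_gt_1:
  assumes "x \<notin> \<rat>" shows "bcf_tail x (Suc n) > 1"
  using bcf_digit_bounds[OF assms, of n] unfolding bcf_tail_Suc by simp

lemma bcf_tail_gt_1:
  assumes "x \<notin> \<rat>" "n \<ge> 1" shows "bcf_tail x n > 1"
  using bcf_tail_Suc_gt_1[OF assms(1), of "n - 1"] assms(2) by simp

lemma bcf_tail_recurrence:
  assumes "x \<notin> \<rat>" shows "bcf_tail x n = bcf_digit x n - 1 / bcf_tail x (Suc n)"
  using bcf_digit_bounds(2)[OF assms, of n] unfolding bcf_tail_Suc by simp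

lemma bcf_digit_ge_2:
  assumes "x \<notin> \<rat>" "n \<ge> 1" shows "bcf_digit x n \<ge> 2"
  using bcf_tail_gt_1[OF assms] bcf_digit_bounds(2)[OF assms(1), of n] by linarith

lemma bcf_digit_0:
  assumes "0 < x" "x < 1" shows "bcf_digit x 0 = 1"
  using assms by (simp add: bcf_digit_def floor_eq_iff)

lemma bcf_unit_interval_eq:
  assumes "0 < x" "x < 1" "x \<notin> \<rat>" shows "x = 1 - 1 / bcf_tail x 1"
  using bcf_tail_recurrence[OF assms(3), of 0] bcf_digit_0[OF assms(1,2)] by simp

definition bcf_tail_prod :: "real \<Rightarrow> nat \<Rightarrow> real" where
  "bcf_tail_prod x n = (\<Prod>i\<in>{1..n}. bcf_tail x i)"

lemma bcf_tail_prod_0 [simp]: "bcf_tail_prod x 0 = 1"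
  by (simp add: bcf_tail_prod_def)

lemma bcf_tail_prod_Suc: "bcf_tail_prod x (Suc n) = bcf_tail_prod x n * bcf_tail x (Suc n)"
  by (simp add: bcf_tail_prod_def prod.nat_ivl_Suc')

lemma bcf_tail_prod_ge_1:
  assumes "x \<notin> \<rat>" shows "bcf_tail_prod x n \<ge> 1"
  unfolding bcf_tail_prod_def using bcf_tail_gt_1[OF assms]
  by (intro prod_ge_1) (auto intro: less_imp_le)

lemma bcf_tail_prod_pos: "x \<notin> \<rat> \<Longrightarrow> bcf_tail_prod x n > 0"
  using bcf_tail_prod_ge_1 less_le_trans zero_less_one by blast

lemma bcf_tail_prod_mono:
  assumes "x \<notin> \<rat>" "m \<le> n" shows "bcf_tail_prod x m \<le> bcf_tail_prod x n"
  using assms(2)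
proof (induction n rule: dec_induct)
  case (step n)
  have "bcf_tail_prod x n * 1 \<le> bcf_tail_prod x (Suc n)"
    unfolding bcf_tail_prod_Suc using bcf_tail_prod_ge_1[OF assms(1), of n] bcf_tail_Suc_gt_1[OF assms(1), of n]
    by (intro mult_left_mono) auto
  with step.IH show ?case by simp
qed simp

lemma bcf_tail_prod_add:
  "bcf_tail_prod x (m + k) = bcf_tail_prod x m * (\<Prod>i\<in>{Suc m..<Suc m + k}. bcf_tail x i)"
  by (induction k) (simp_all add: bcf_tail_prod_Suc)

lemma bcf_diff_common_prefix:
  assumes x: "0 < x" "x < 1" "x \<notin> \<rat>" and y: "0 < y" "y < 1" "y \<notin> \<rat>"
    and agree: "\<forall>i. 1 \<le> i \<and> i < N \<longrightarrow> bcf_digit x i = bcf_digit y i"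
  shows "x - y = (bcf_tail x N - bcf_tail y N) / (bcf_tail_prod x N * bcf_tail_prod y N)"
  using agree
proof (induction N)
  case (Suc n)
  let ?a = "bcf_tail x" and ?b = "bcf_tail y"
  have "bcf_digit x n = bcf_digit y n"
    using Suc.prems bcf_digit_0[OF x(1,2)] bcf_digit_0[OF y(1,2)] by (cases "n = 0") auto
  then have "?a n - ?b n = 1 / ?b (Suc n) - 1 / ?a (Suc n)"
    using bcf_tail_recurrence[OF x(3), of n] bcf_tail_recurrence[OF y(3), of n] by simp
  also have "\<dots> = (?a (Suc n) - ?b (Suc n)) / (?a (Suc n) * ?b (Suc n))"
    using bcf_tail_Suc_gt_1[OF x(3), of n] bcf_tail_Suc_gt_1[OF y(3), of n] by (simp add: field_simps)
  finally show ?case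
    using Suc by (simp add: bcf_tail_prod_Suc algebra_simps)
qed simp

lemma bcf_twos_block_shift:
  assumes "x \<notin> \<rat>" and "\<forall>i. a \<le> i \<and> i < a + L \<longrightarrow> bcf_digit x i = 2"
  shows "1 / (bcf_tail x a - 1) = 1 / (bcf_tail x (a + L) - 1) + L"
  using assms(2)
proof (induction L arbitrary: a)
  case (Suc L)
  have "bcf_tail x a = 2 - 1 / bcf_tail x (Suc a)"
    using bcf_tail_recurrence[OF assms(1), of a] Suc.prems by simp
  moreover have "1 / ((2 - 1 / t) - 1) = 1 / (t - 1) + 1" if "t > 1" for t :: real
    using that by (simp add: field_simps)
  ultimately have "1 / (bcf_tail x a - 1) = 1 / (bcf_tail x (Suc a) - 1) + 1"
    using bcf_tail_Suc_gt_1[OF assms(1)] by simp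
  moreover have "1 / (bcf_tail x (Suc a) - 1) = 1 / (bcf_tail x (Suc a + L) - 1) + L"
    using Suc.IH[of "Suc a"] Suc.prems by auto
  ultimately show ?case by simp
qed simp

lemma bcf_twos_block_tail_mono:
  assumes "x \<notin> \<rat>" "a \<ge> 1" "\<forall>i. a \<le> i \<and> i < a + L \<longrightarrow> bcf_digit x i = 2"
  shows "bcf_tail x a \<le> bcf_tail x (a + L)"
proof -
  have "1 / (bcf_tail x (a + L) - 1) \<le> 1 / (bcf_tail x a - 1)"
    using bcf_twos_block_shift[OF assms(1,3)] by simp
  then show ?thesis
    using bcf_tail_gt_1[OF assms(1,2)] bcf_tail_gt_1[OF assms(1), of "a + L"] assms(2)
    by (simp add: divide_le_eq_1 field_simps)
qed

lemma bcf_twos_block_tail_near_1: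
  fixes L :: nat
  assumes "x \<notin> \<rat>" "L \<ge> 1" "\<forall>i. a \<le> i \<and> i < a + L \<longrightarrow> bcf_digit x i = 2"
  shows "bcf_tail x a - 1 < 1 / L"
proof -
  have pos: "1 / (bcf_tail x (a + L) - 1) > 0"
    using bcf_tail_gt_1[OF assms(1), of "a + L"] assms(2) by simp
  have "bcf_tail x a - 1 = 1 / (1 / (bcf_tail x (a + L) - 1) + L)"
    using bcf_twos_block_shift[OF assms(1,3)] by (metis inverse_eq_divide inverse_inverse_eq)
  also have "\<dots> < 1 / L" using pos assms(2) by (intro divide_strict_left_mono mult_pos_pos add_pos_nonneg) auto
  finally show ?thesis .
qed

lemma bcf_twos_block_prod_le:
  assumes "x \<notin> \<rat>" "a \<ge> 1" and twos: "\<forall>i. a \<le> i \<and> i < a + L \<longrightarrow> bcf_digit x i = 2"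
  shows "(\<Prod>i\<in>{a..<a + L}. bcf_tail x i) \<le> L + 1"
proof -
  define z where "z i = 1 / (bcf_tail x i - 1)" for i
  have z_pos: "z i > 0" if "i \<ge> 1" for i
    using bcf_tail_gt_1[OF assms(1) that] unfolding z_def by simp
  have z_shift: "z i = z (i + M) + M" if "a \<le> i" "i + M \<le> a + L" for i M
    unfolding z_def using twos that by (intro bcf_twos_block_shift[OF assms(1)]) auto
  have prod_eq: "(\<Prod>i\<in>{a..<a + M}. bcf_tail x i) = (z a + 1) / (z (a + M) + 1)" if "M \<le> L" for M
    using that
  proof (induction M)
    case (Suc M)
    have "bcf_tail x (a + M) = (z (a + M) + 1) / z (a + M)"
      using bcf_tail_gt_1[OF assms(1), of "a + M"] assms(2) unfolding z_def by (simp add: field_simps)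
    also have "\<dots> = (z (a + M) + 1) / (z (a + Suc M) + 1)"
      using z_shift[of "a + M" 1] Suc.prems by simp
    finally show ?case
      using Suc z_pos[of "a + M"] assms(2) by (simp add: prod.atLeastLessThan_Suc)
  qed (use z_pos[OF assms(2)] in simp)
  have "z a = z (a + L) + L" using z_shift[of a L] by simp
  then have "(\<Prod>i\<in>{a..<a + L}. bcf_tail x i) = (z (a + L) + L + 1) / (z (a + L) + 1)"
    using prod_eq[of L] by simp
  also have "\<dots> \<le> L + 1"
    using z_pos[of "a + L"] assms(2) by (simp add: divide_le_eq algebra_simps)
  finally show ?thesis .
qed

lemma bcf_digits_not_eventually_2:
  assumes "x \<notin> \<rat>" shows "\<exists>m>n. bcf_digit x m \<noteq> 2"
proof (rule ccontr)
  assume "\<not> ?thesis"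
  then have shift: "1 / (bcf_tail x (Suc n) - 1) = 1 / (bcf_tail x (Suc n + L) - 1) + L" for L :: nat
    by (intro bcf_twos_block_shift[OF assms]) auto
  obtain L :: nat where L: "1 / (bcf_tail x (Suc n) - 1) < L"
    using reals_Archimedean2 by blast
  have "1 / (bcf_tail x (Suc n + L) - 1) > 0"
    using bcf_tail_Suc_gt_1[OF assms, of "n + L"] by simp
  with shift[of L] L show False by simp
qed

lemma bcf_tail_frequently_ge_2:
  assumes "x \<notin> \<rat>" shows "\<exists>i>n. bcf_tail x i \<ge> 2"
proof -
  obtain i where i: "i > n" "bcf_digit x i \<noteq> 2"
    using bcf_digits_not_eventually_2[OF assms] by blast
  then have "bcf_digit x i \<ge> 3" using bcf_digit_ge_2[OF assms, of i] by simp
  then show ?thesis using i bcf_digit_bounds(1)[OF assms, of i] by force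
qed

lemma prod_greaterThanAtMost_unbounded:
  fixes t :: "nat \<Rightarrow> real"
  assumes ge1: "\<forall>i>m. t i \<ge> 1" and ge2: "\<forall>n. \<exists>i>n. t i \<ge> 2"
  shows "\<exists>n\<ge>m. prod t {m<..n} \<ge> 2 ^ k"
proof (induction k)
  case (Suc k)
  then obtain n where n: "n \<ge> m" "prod t {m<..n} \<ge> 2 ^ k" by auto
  obtain j where j: "j > n" "t j \<ge> 2" using ge2 by auto
  have "{m<..j} = insert j ({m<..n} \<union> {n<..<j})" using n j by auto
  then have "prod t {m<..j} = t j * prod t ({m<..n} \<union> {n<..<j})"
    using n j by (simp add: prod.insert)
  also have "\<dots> = prod t {m<..n} * prod t {n<..<j} * t j"
    by (subst prod.union_disjoint) auto
  finally have split: "prod t {m<..j} = prod t {m<..n} * prod t {n<..<j} * t j" .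
  moreover have "prod t {n<..<j} \<ge> 1" using ge1 n by (intro prod_ge_1) auto
  moreover have "prod t {m<..n} \<ge> 0" using n(2) by (rule order_trans[rotated]) simp
  ultimately have "prod t {m<..j} \<ge> 2 ^ k * 1 * 2"
    unfolding split using n j by (intro mult_mono mult_nonneg_nonneg) auto
  then show ?case using j n by (intro exI[of _ j]) auto
qed auto

lemma bcf_tail_prod_unbounded:
  assumes "x \<notin> \<rat>" shows "\<exists>n\<ge>m. (\<Prod>i\<in>{m<..n}. bcf_tail x i) \<ge> 2 ^ k"
  using bcf_tail_gt_1[OF assms] bcf_tail_frequently_ge_2[OF assms]
  by (intro prod_greaterThanAtMost_unbounded) (auto intro: less_imp_le)

lemma bcf_digits_inj:
  assumes x: "0 < x" "x < 1" "x \<notin> \<rat>" and y: "0 < y" "y < 1" "y \<notin> \<rat>"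
    and digits: "\<forall>n\<ge>1. bcf_digit x n = bcf_digit y n"
  shows "x = y"
proof -
  have "\<bar>x - y\<bar> \<le> (1 / 2) ^ k" for k
  proof -
    obtain n where "(\<Prod>i\<in>{0<..n}. bcf_tail x i) \<ge> 2 ^ k"
      using bcf_tail_prod_unbounded[OF x(3), of 0 k] by auto
    moreover have "{0<..n} = {1..n}" by auto
    ultimately have "bcf_tail_prod x n \<ge> 2 ^ k"
      unfolding bcf_tail_prod_def by simp
    then have Px: "bcf_tail_prod x (Suc n) \<ge> 2 ^ k"
      using bcf_tail_prod_mono[OF x(3), of n "Suc n"] by simp
    have Py: "bcf_tail_prod y (Suc n) \<ge> 1" using bcf_tail_prod_ge_1[OF y(3)] .
    have "\<bar>bcf_tail x (Suc n) - bcf_tail y (Suc n)\<bar> < 1"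
      using bcf_digit_bounds[OF x(3), of "Suc n"] bcf_digit_bounds[OF y(3), of "Suc n"] digits
      by fastforce
    moreover have "x - y = (bcf_tail x (Suc n) - bcf_tail y (Suc n))
        / (bcf_tail_prod x (Suc n) * bcf_tail_prod y (Suc n))"
      using digits by (intro bcf_diff_common_prefix[OF x y]) auto
    moreover have pos: "bcf_tail_prod x (Suc n) * bcf_tail_prod y (Suc n) > 0"
      using bcf_tail_prod_pos x(3) y(3) by (simp add: mult_pos_pos)
    ultimately have "\<bar>x - y\<bar> \<le> 1 / (bcf_tail_prod x (Suc n) * bcf_tail_prod y (Suc n))"
      by (simp add: abs_divide divide_right_mono)
    also have "\<dots> \<le> 1 / (2 ^ k * 1)"
      using Px Py pos bcf_tail_prod_ge_1[OF x(3), of "Suc n"] by (intro divide_left_mono mult_mono) auto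
    finally show ?thesis by (simp add: power_one_over)
  qed
  then have "\<bar>x - y\<bar> \<le> 0"
    by (intro LIMSEQ_le_const[OF LIMSEQ_power_zero[of "1 / 2 :: real"]]) auto
  then show ?thesis by simp
qed

section \<open>Convergents\<close>

text \<open>For a digit sequence \<open>\<tau>\<close>, \<open>bcf_den_pair \<tau> m = (Q_m, Q_(m-1))\<close> where
  \<open>Q_m = \<tau> m * Q_(m-1) - Q_(m-2)\<close>, \<open>Q_0 = 1\<close>, \<open>Q_(-1) = 0\<close>; \<open>bcf_num_pair\<close> gives the numerators
  \<open>P_m\<close> for the leading digit \<open>b_0 = 1\<close>. Replacing the complete quotient \<open>t_(m+1)\<close> by 1, i.e. all
  later digits by 2, turns \<open>x\<close> into \<open>bcf_conv_num / bcf_conv_den = (P_m - P_(m-1)) / (Q_m - Q_(m-1))\<close>.\<close>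

fun bcf_den_pair :: "(nat \<Rightarrow> int) \<Rightarrow> nat \<Rightarrow> int \<times> int" where
  "bcf_den_pair \<tau> 0 = (1, 0)"
| "bcf_den_pair \<tau> (Suc m) =
    (\<tau> (Suc m) * fst (bcf_den_pair \<tau> m) - snd (bcf_den_pair \<tau> m), fst (bcf_den_pair \<tau> m))"

fun bcf_num_pair :: "(nat \<Rightarrow> int) \<Rightarrow> nat \<Rightarrow> int \<times> int" where
  "bcf_num_pair \<tau> 0 = (1, 1)"
| "bcf_num_pair \<tau> (Suc m) =
    (\<tau> (Suc m) * fst (bcf_num_pair \<tau> m) - snd (bcf_num_pair \<tau> m), fst (bcf_num_pair \<tau> m))"

definition bcf_conv_num :: "(nat \<Rightarrow> int) \<Rightarrow> nat \<Rightarrow> int" where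
  "bcf_conv_num \<tau> m = fst (bcf_num_pair \<tau> m) - snd (bcf_num_pair \<tau> m)"

definition bcf_conv_den :: "(nat \<Rightarrow> int) \<Rightarrow> nat \<Rightarrow> int" where
  "bcf_conv_den \<tau> m = fst (bcf_den_pair \<tau> m) - snd (bcf_den_pair \<tau> m)"

lemma bcf_conv_den_cong:
  "\<forall>i. 1 \<le> i \<and> i \<le> m \<longrightarrow> \<tau> i = \<tau>' i \<Longrightarrow> bcf_conv_den \<tau> m = bcf_conv_den \<tau>' m"
proof -
  assume "\<forall>i. 1 \<le> i \<and> i \<le> m \<longrightarrow> \<tau> i = \<tau>' i"
  then have "bcf_den_pair \<tau> m = bcf_den_pair \<tau>' m" by (induction m) auto
  then show ?thesis by (simp add: bcf_conv_den_def)
qed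

lemma bcf_pair_det:
  "fst (bcf_num_pair \<tau> m) * snd (bcf_den_pair \<tau> m) - snd (bcf_num_pair \<tau> m) * fst (bcf_den_pair \<tau> m) = -1"
  by (induction m) (auto simp: algebra_simps)

lemma bcf_den_pair_bounds:
  assumes "\<forall>i. 1 \<le> i \<and> i \<le> m \<longrightarrow> \<tau> i \<ge> 2"
  shows "bcf_conv_den \<tau> m \<ge> 1" "snd (bcf_den_pair \<tau> m) \<ge> 0" "fst (bcf_den_pair \<tau> m) \<ge> 1"
proof -
  have "bcf_conv_den \<tau> m \<ge> 1 \<and> snd (bcf_den_pair \<tau> m) \<ge> 0" using assms
  proof (induction m)
    case (Suc m)
    then have IH: "fst (bcf_den_pair \<tau> m) - snd (bcf_den_pair \<tau> m) \<ge> 1" "snd (bcf_den_pair \<tau> m) \<ge> 0"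
      by (auto simp: bcf_conv_den_def)
    have "\<tau> (Suc m) * fst (bcf_den_pair \<tau> m) \<ge> 2 * fst (bcf_den_pair \<tau> m)"
      using Suc.prems IH by (intro mult_right_mono) auto
    then have "\<tau> (Suc m) * fst (bcf_den_pair \<tau> m) - snd (bcf_den_pair \<tau> m) - fst (bcf_den_pair \<tau> m) \<ge> 1"
      using IH by linarith
    then show ?case using IH by (simp add: bcf_conv_den_def)
  qed (simp add: bcf_conv_den_def)
  then show "bcf_conv_den \<tau> m \<ge> 1" "snd (bcf_den_pair \<tau> m) \<ge> 0" "fst (bcf_den_pair \<tau> m) \<ge> 1"
    by (auto simp: bcf_conv_den_def)
qed

lemma bcf_conv_den_Suc:
  "bcf_conv_den \<tau> (Suc m) = bcf_conv_den \<tau> m + (\<tau> (Suc m) - 2) * fst (bcf_den_pair \<tau> m)"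
  by (simp add: bcf_conv_den_def algebra_simps)

lemma bcf_conv_den_mono_Suc:
  assumes "\<forall>i. 1 \<le> i \<and> i \<le> Suc m \<longrightarrow> \<tau> i \<ge> 2"
  shows "bcf_conv_den \<tau> m \<le> bcf_conv_den \<tau> (Suc m)"
    and "\<tau> (Suc m) \<ge> 3 \<Longrightarrow> bcf_conv_den \<tau> m + 1 \<le> bcf_conv_den \<tau> (Suc m)"
proof -
  have Q: "fst (bcf_den_pair \<tau> m) \<ge> 1" using bcf_den_pair_bounds[of m \<tau>] assms by auto
  then show "bcf_conv_den \<tau> m \<le> bcf_conv_den \<tau> (Suc m)"
    unfolding bcf_conv_den_Suc using assms by simp
  assume "\<tau> (Suc m) \<ge> 3"
  then have "(\<tau> (Suc m) - 2) * fst (bcf_den_pair \<tau> m) \<ge> 1 * 1" using Q by (intro mult_mono) auto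
  then show "bcf_conv_den \<tau> m + 1 \<le> bcf_conv_den \<tau> (Suc m)" unfolding bcf_conv_den_Suc by simp
qed

lemma bcf_conv_den_mono:
  assumes "\<forall>i. 1 \<le> i \<and> i \<le> n \<longrightarrow> \<tau> i \<ge> 2" "m \<le> n"
  shows "bcf_conv_den \<tau> m \<le> bcf_conv_den \<tau> n"
  using assms(2,1)
proof (induction n rule: dec_induct)
  case (step n) then show ?case using bcf_conv_den_mono_Suc(1)[of n \<tau>] by force
qed simp

lemma bcf_tail_prod_pair_identity:
  fixes r :: "nat \<Rightarrow> int \<times> int"
  assumes x: "x \<notin> \<rat>"
    and rec: "\<And>m. r (Suc m) = (bcf_digit x (Suc m) * fst (r m) - snd (r m), fst (r m))"
    and base: "c * bcf_tail x 1 = fst (r 0) * bcf_tail x 1 - snd (r 0)"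
  shows "c * bcf_tail_prod x (Suc m) = fst (r m) * bcf_tail x (Suc m) - snd (r m)"
proof (induction m)
  case 0
  then show ?case using base by (simp add: bcf_tail_prod_def)
next
  case (Suc m)
  define b where "b = real_of_int (bcf_digit x (Suc m))"
  define q where "q = real_of_int (fst (r m))"
  define q' where "q' = real_of_int (snd (r m))"
  define s where "s = bcf_tail x (Suc m)"
  define u where "u = bcf_tail x (Suc (Suc m))"
  have "s = b - 1 / u" "u > 1"
    unfolding b_def s_def u_def using bcf_tail_recurrence[OF x, of "Suc m"] bcf_tail_Suc_gt_1[OF x] by auto
  then have us: "u * s = b * u - 1" by (simp add: field_simps)
  have "c * bcf_tail_prod x (Suc (Suc m)) = u * (c * bcf_tail_prod x (Suc m))"
    by (simp add: bcf_tail_prod_Suc u_def)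
  also have "\<dots> = u * (q * s - q')" using Suc.IH by (simp add: q_def q'_def s_def)
  also have "\<dots> = q * (u * s) - q' * u" by (simp add: algebra_simps)
  also have "\<dots> = (b * q - q') * u - q" unfolding us by (simp add: algebra_simps)
  finally show ?case by (simp add: rec b_def q_def q'_def u_def)
qed

lemma bcf_tail_prod_den_pair:
  assumes x: "0 < x" "x < 1" "x \<notin> \<rat>"
  shows "bcf_tail_prod x (Suc m)
      = fst (bcf_den_pair (bcf_digit x) m) * bcf_tail x (Suc m) - snd (bcf_den_pair (bcf_digit x) m)"
    and "x * bcf_tail_prod x (Suc m)
      = fst (bcf_num_pair (bcf_digit x) m) * bcf_tail x (Suc m) - snd (bcf_num_pair (bcf_digit x) m)"
proof -
  show "bcf_tail_prod x (Suc m)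
      = fst (bcf_den_pair (bcf_digit x) m) * bcf_tail x (Suc m) - snd (bcf_den_pair (bcf_digit x) m)"
    using bcf_tail_prod_pair_identity[OF x(3), of "bcf_den_pair (bcf_digit x)" 1] by simp
  have unit: "x * t = t - 1" if "x = 1 - 1 / t" "t > 1" for t
    using that by (simp add: field_simps)
  have "x * bcf_tail x 1 = bcf_tail x 1 - 1"
    by (rule unit[OF bcf_unit_interval_eq[OF x]]) (use bcf_tail_Suc_gt_1[OF x(3), of 0] in simp)
  then show "x * bcf_tail_prod x (Suc m)
      = fst (bcf_num_pair (bcf_digit x) m) * bcf_tail x (Suc m) - snd (bcf_num_pair (bcf_digit x) m)"
    using bcf_tail_prod_pair_identity[OF x(3), of "bcf_num_pair (bcf_digit x)" x] by simp
qed

lemma bcf_conv_den_le_tail_prod: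
  assumes x: "0 < x" "x < 1" "x \<notin> \<rat>"
  shows "bcf_conv_den (bcf_digit x) m \<le> bcf_tail_prod x (Suc m)"
proof -
  let ?Q = "bcf_den_pair (bcf_digit x) m"
  have "fst ?Q \<ge> 1" using bcf_den_pair_bounds[of m] bcf_digit_ge_2[OF x(3)] by auto
  then have "real_of_int (fst ?Q) * 1 \<le> fst ?Q * bcf_tail x (Suc m)"
    using bcf_tail_Suc_gt_1[OF x(3), of m] by (intro mult_left_mono) auto
  then show ?thesis
    unfolding bcf_tail_prod_den_pair(1)[OF x] bcf_conv_den_def by simp
qed

lemma bcf_conv_approx:
  assumes x: "0 < x" "x < 1" "x \<notin> \<rat>"
  shows "\<bar>x - bcf_conv_num (bcf_digit x) m / bcf_conv_den (bcf_digit x) m\<bar>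
    \<le> (bcf_tail x (Suc m) - 1) / (bcf_conv_den (bcf_digit x) m)\<^sup>2"
proof -
  define P where "P = bcf_num_pair (bcf_digit x) m"
  define q where "q = real_of_int (fst (bcf_den_pair (bcf_digit x) m))"
  define q' where "q' = real_of_int (snd (bcf_den_pair (bcf_digit x) m))"
  define p where "p = real_of_int (fst P)"
  define p' where "p' = real_of_int (snd P)"
  define s where "s = bcf_tail x (Suc m)"
  have D: "real_of_int (bcf_conv_den (bcf_digit x) m) = q - q'"
    unfolding bcf_conv_den_def q_def q'_def by simp
  have s1: "s > 1" unfolding s_def using bcf_tail_Suc_gt_1[OF x(3)] .
  have "fst (bcf_den_pair (bcf_digit x) m) \<ge> 1" "snd (bcf_den_pair (bcf_digit x) m) \<ge> 0"
    "bcf_conv_den (bcf_digit x) m \<ge> 1"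
    using bcf_den_pair_bounds[of m "bcf_digit x"] bcf_digit_ge_2[OF x(3)] by auto
  then have "q \<ge> 1" "q' \<ge> 0" "q - q' \<ge> 1" using D unfolding q_def q'_def by linarith+
  moreover have "q * 1 \<le> q * s" using \<open>q \<ge> 1\<close> s1 by (intro mult_left_mono) auto
  ultimately have den: "q * s - q' \<ge> q - q'" "q - q' > 0" by auto
  have "x * (q * s - q') = p * s - p'"
    using bcf_tail_prod_den_pair[OF x, of m] unfolding q_def q'_def p_def p'_def s_def P_def by simp
  then have xe: "x = (p * s - p') / (q * s - q')" using den by (simp add: eq_divide_eq)
  have "x - (p - p') / (q - q')
      = ((p * s - p') * (q - q') - (p - p') * (q * s - q')) / ((q * s - q') * (q - q'))"
    unfolding xe using den by (simp add: diff_frac_eq)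
  also have "(p * s - p') * (q - q') - (p - p') * (q * s - q') = (s - 1) * (p' * q - p * q')"
    by (simp add: algebra_simps)
  also have "p * q' - p' * q = -1"
    using bcf_pair_det[of "bcf_digit x" m] unfolding p_def p'_def q_def q'_def P_def
    by (metis of_int_diff of_int_minus of_int_mult of_int_1)
  then have "p' * q - p * q' = 1" by simp
  finally have eq: "x - (p - p') / (q - q') = (s - 1) / ((q * s - q') * (q - q'))" by simp
  have "\<bar>x - (p - p') / (q - q')\<bar> = (s - 1) / ((q * s - q') * (q - q'))"
    unfolding eq using s1 den by simp
  also have "\<dots> \<le> (s - 1) / ((q - q') * (q - q'))"
    using s1 den by (intro divide_left_mono mult_right_mono mult_pos_pos) auto
  finally show ?thesis
    unfolding bcf_conv_num_def by (simp add: D P_def p_def p'_def s_def power2_eq_square)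
qed

section \<open>Numbers with prescribed digits\<close>

definition bcf_admissible :: "(nat \<Rightarrow> nat) \<Rightarrow> bool" where
  "bcf_admissible \<sigma> \<longleftrightarrow> (\<forall>n\<ge>1. \<sigma> n \<ge> 2) \<and> (\<forall>n. \<exists>m>n. \<sigma> m \<noteq> 2)"

text \<open>\<open>trunc_tail \<sigma> k n\<close> is the value of the digits \<open>\<sigma> n, \<dots>, \<sigma> (n + k - 1)\<close> followed by
  \<open>2, 2, \<dots>\<close> (complete quotient 1); it increases with \<open>k\<close> to the complete quotient \<open>seq_tail \<sigma> n\<close>.\<close>

fun trunc_tail :: "(nat \<Rightarrow> nat) \<Rightarrow> nat \<Rightarrow> nat \<Rightarrow> real" where
  "trunc_tail \<sigma> 0 n = 1"
| "trunc_tail \<sigma> (Suc k) n = \<sigma> n - 1 / trunc_tail \<sigma> k (Suc n)"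

definition seq_tail :: "(nat \<Rightarrow> nat) \<Rightarrow> nat \<Rightarrow> real" where
  "seq_tail \<sigma> n = (SUP k. trunc_tail \<sigma> k n)"

definition bcf_point :: "(nat \<Rightarrow> nat) \<Rightarrow> real" where
  "bcf_point \<sigma> = 1 - 1 / seq_tail \<sigma> 1"

context
  fixes \<sigma> :: "nat \<Rightarrow> nat"
  assumes \<sigma>: "bcf_admissible \<sigma>"
begin

lemma admissible_ge_2: "n \<ge> 1 \<Longrightarrow> \<sigma> n \<ge> 2"
  using \<sigma> unfolding bcf_admissible_def by auto

lemma trunc_tail_ge_1: "n \<ge> 1 \<Longrightarrow> 1 \<le> trunc_tail \<sigma> k n"
proof (induction k arbitrary: n)
  case (Suc k)
  have "1 / trunc_tail \<sigma> k (Suc n) \<le> 1" using Suc.IH[of "Suc n"] by simp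
  with admissible_ge_2[OF Suc.prems] show ?case by simp
qed simp

lemma trunc_tail_le: "n \<ge> 1 \<Longrightarrow> trunc_tail \<sigma> k n \<le> \<sigma> n"
  using admissible_ge_2[of n] trunc_tail_ge_1[of "Suc n" "k - 1"] by (cases k) auto

lemma trunc_tail_mono: "n \<ge> 1 \<Longrightarrow> trunc_tail \<sigma> k n \<le> trunc_tail \<sigma> (Suc k) n"
proof (induction k arbitrary: n)
  case 0 then show ?case using admissible_ge_2[of n] by simp
next
  case (Suc k)
  have "1 / trunc_tail \<sigma> (Suc k) (Suc n) \<le> 1 / trunc_tail \<sigma> k (Suc n)"
    using Suc.IH[of "Suc n"] trunc_tail_ge_1[of "Suc n" k] by (intro divide_left_mono) auto
  then show ?case by simp
qed

lemma trunc_tail_LIMSEQ: "n \<ge> 1 \<Longrightarrow> (\<lambda>k. trunc_tail \<sigma> k n) \<longlonglongrightarrow> seq_tail \<sigma> n"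
  unfolding seq_tail_def
  by (rule LIMSEQ_incseq_SUP) (auto intro!: bdd_aboveI incseq_SucI trunc_tail_le trunc_tail_mono)

lemma seq_tail_bounds:
  assumes "n \<ge> 1" shows "1 \<le> seq_tail \<sigma> n" "seq_tail \<sigma> n \<le> \<sigma> n"
  using trunc_tail_LIMSEQ[OF assms] trunc_tail_ge_1[OF assms] trunc_tail_le[OF assms]
  by (auto intro: LIMSEQ_le_const LIMSEQ_le_const2)

lemma seq_tail_recurrence:
  assumes "n \<ge> 1" shows "seq_tail \<sigma> n = \<sigma> n - 1 / seq_tail \<sigma> (Suc n)"
proof -
  have "seq_tail \<sigma> (Suc n) \<noteq> 0" using seq_tail_bounds(1)[of "Suc n"] by simp
  then have "(\<lambda>k. trunc_tail \<sigma> (Suc k) n) \<longlonglongrightarrow> \<sigma> n - 1 / seq_tail \<sigma> (Suc n)"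
    using trunc_tail_LIMSEQ[of "Suc n"] by (auto intro!: tendsto_intros)
  moreover have "(\<lambda>k. trunc_tail \<sigma> (Suc k) n) \<longlonglongrightarrow> seq_tail \<sigma> n"
    using trunc_tail_LIMSEQ[OF assms] by (rule LIMSEQ_Suc)
  ultimately show ?thesis using LIMSEQ_unique by blast
qed

text \<open>A complete quotient equal to 1 would force all later digits to be 2.\<close>

lemma seq_tail_gt_1:
  assumes "n \<ge> 1" shows "seq_tail \<sigma> n > 1"
proof (rule ccontr)
  have step: "\<sigma> m = 2 \<and> seq_tail \<sigma> (Suc m) = 1" if "seq_tail \<sigma> m = 1" "m \<ge> 1" for m
  proof -
    have r: "1 = \<sigma> m - 1 / seq_tail \<sigma> (Suc m)" using seq_tail_recurrence[OF that(2)] that by simp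
    moreover have "1 / seq_tail \<sigma> (Suc m) \<le> 1" using seq_tail_bounds(1)[of "Suc m"] by simp
    ultimately have "\<sigma> m = 2" using admissible_ge_2[OF that(2)] by linarith
    with r show ?thesis by simp
  qed
  assume "\<not> ?thesis"
  then have "seq_tail \<sigma> n = 1" using seq_tail_bounds[OF assms] by simp
  then have "\<sigma> (n + k) = 2 \<and> seq_tail \<sigma> (n + k) = 1" for k
    by (induction k) (use step assms in auto)
  moreover obtain m where "m > n" "\<sigma> m \<noteq> 2" using \<sigma> unfolding bcf_admissible_def by blast
  ultimately show False by (metis less_imp_add_positive)
qed

lemma seq_tail_strict_bounds:
  assumes "n \<ge> 1" shows "real (\<sigma> n) - 1 < seq_tail \<sigma> n" "seq_tail \<sigma> n < \<sigma> n"
  using seq_tail_recurrence[OF assms] seq_tail_gt_1[of "Suc n"] by auto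

lemma floor_seq_tail: "n \<ge> 1 \<Longrightarrow> \<lfloor>seq_tail \<sigma> n\<rfloor> = int (\<sigma> n) - 1"
  using seq_tail_strict_bounds[of n] by (simp add: floor_eq_iff)

lemma seq_tail_Suc: "n \<ge> 1 \<Longrightarrow> seq_tail \<sigma> (Suc n) = 1 / (\<sigma> n - seq_tail \<sigma> n)"
  using seq_tail_recurrence[of n] seq_tail_gt_1[of "Suc n"] by simp

text \<open>Irrationality by descent: \<open>t_n = a / c\<close> forces \<open>t_(n+1) = c / d\<close> with \<open>0 < d < c\<close>.\<close>

lemma seq_tail_neq_fraction:
  "c > 0 \<Longrightarrow> n \<ge> 1 \<Longrightarrow> seq_tail \<sigma> n \<noteq> of_int a / of_nat c"
proof (induction c arbitrary: n a rule: less_induct)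
  case (less c)
  show ?case
  proof
    assume e: "seq_tail \<sigma> n = of_int a / of_nat c"
    define d where "d = int (\<sigma> n) * int c - a"
    have c: "real c > 0" using less by simp
    have "real_of_int a < real_of_int (int (\<sigma> n) * int c)"
      "real_of_int ((int (\<sigma> n) - 1) * int c) < real_of_int a"
      using seq_tail_strict_bounds[OF less(3)] e c by (simp_all add: field_simps)
    then have "0 < d" "d < int c" unfolding d_def of_int_less_iff by (simp_all add: algebra_simps)
    have "seq_tail \<sigma> (Suc n) = 1 / (real (\<sigma> n) - of_int a / real c)"
      using seq_tail_Suc[OF less(3)] e by simp
    also have "\<dots> = of_int (int c) / of_nat (nat d)"
      using c \<open>0 < d\<close> unfolding d_def by (simp add: field_simps)
    moreover have "nat d < c" using \<open>0 < d\<close> \<open>d < int c\<close> by (simp add: nat_less_iff)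
    ultimately show False
      using less.IH[of "nat d" "Suc n" "int c"] \<open>0 < d\<close> by simp
  qed
qed

lemma bcf_point_unit_interval: "0 < bcf_point \<sigma>" "bcf_point \<sigma> < 1"
  unfolding bcf_point_def using seq_tail_gt_1[of 1] by auto

lemma bcf_tail_bcf_point: "n \<ge> 1 \<Longrightarrow> bcf_tail (bcf_point \<sigma>) n = seq_tail \<sigma> n"
proof (induction n rule: dec_induct)
  case base
  have "\<lfloor>bcf_point \<sigma>\<rfloor> = 0" using bcf_point_unit_interval by (simp add: floor_eq_iff)
  then show ?case
    using seq_tail_gt_1[of 1] by (simp add: bcf_tail.simps bcf_point_def)
next
  case (step n)
  then show ?case using floor_seq_tail[OF step.hyps(1)] seq_tail_Suc[OF step.hyps(1)]
    by (simp add: bcf_tail.simps)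
qed

lemma bcf_digit_bcf_point: "n \<ge> 1 \<Longrightarrow> bcf_digit (bcf_point \<sigma>) n = \<sigma> n"
  by (simp add: bcf_digit_def bcf_tail_bcf_point floor_seq_tail)

lemma bcf_point_not_Rats: "bcf_point \<sigma> \<notin> \<rat>"
proof
  assume "bcf_point \<sigma> \<in> \<rat>"
  moreover have "seq_tail \<sigma> 1 = 1 / (1 - bcf_point \<sigma>)"
    unfolding bcf_point_def using seq_tail_gt_1[of 1] by simp
  ultimately have "seq_tail \<sigma> 1 \<in> \<rat>" by simp
  then obtain a b where "b > 0" "seq_tail \<sigma> 1 = of_int a / of_int b"
    by (auto elim: Rats_cases')
  then show False using seq_tail_neq_fraction[of "nat b" 1 a] by simp
qed

end

section \<open>Irrationality exponent\<close>

lemma exists_coprime_fraction: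
  fixes p0 q0 :: int assumes "q0 > 0"
  obtains p q where "q > 0" "coprime p q" "q \<le> q0" "real_of_int p / q = real_of_int p0 / q0"
proof -
  define g where "g = gcd p0 q0"
  have g: "g > 0" unfolding g_def using assms by simp
  define p where "p = p0 div g"
  define q where "q = q0 div g"
  have p0: "p0 = p * g" and q0: "q0 = q * g" unfolding p_def q_def g_def by simp_all
  have "coprime p q" unfolding p_def q_def g_def using assms by (intro div_gcd_coprime) auto
  moreover have "q > 0" using q0 g assms by (auto simp: zero_less_mult_iff)
  moreover have "q * 1 \<le> q * g" using \<open>q > 0\<close> g by (intro mult_left_mono) auto
  moreover have "real_of_int p / q = real_of_int p0 / q0" using g unfolding p0 q0 by simp
  ultimately show ?thesis using that q0 by simp
qed

lemma coprime_approximation_within: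
  fixes x m d :: real
  assumes m: "m \<ge> 1" and d: "d > 0"
    and approx: "\<And>Q :: int. \<exists>p q :: int. q \<ge> Q \<and> q > 0 \<and>
      \<bar>x - real_of_int p / real_of_int q\<bar> < real_of_int q powr (- m)"
  obtains p :: int and q :: nat
  where "q > 0" "coprime p (int q)" "\<bar>x - p / q\<bar> < q powr (- m)" "\<bar>x - p / q\<bar> < d"
proof -
  obtain p0 q0 :: int where pq0: "q0 \<ge> \<lceil>1 / d\<rceil> + 1" "q0 > 0" "\<bar>x - p0 / q0\<bar> < q0 powr (- m)"
    using approx by blast
  obtain p q where pq: "q > 0" "coprime p q" "q \<le> q0" "real_of_int p / q = real_of_int p0 / q0"
    using exists_coprime_fraction[OF pq0(2)] by blast
  have "real_of_int q0 powr (- m) \<le> real_of_int q powr (- m)"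
    using pq m by (intro powr_mono2') auto
  moreover have "real_of_int q0 powr (- m) < d"
  proof -
    have "real_of_int (\<lceil>1 / d\<rceil> + 1) \<le> q0" using pq0(1) by (simp only: of_int_le_iff)
    then have "1 / d < q0" using le_of_int_ceiling[of "1 / d"] by linarith
    then have "1 / q0 < d" using d pq0(2) by (simp add: field_simps)
    moreover have "real_of_int q0 powr (- m) \<le> real_of_int q0 powr (- 1)"
      using pq0 m by (intro powr_mono) auto
    ultimately show ?thesis using pq0(2) by (simp add: powr_minus_divide)
  qed
  ultimately show ?thesis
    using that[of "nat q" p] pq pq0(3) by simp
qed

lemma irrat_exp_ge_if_approximable:
  fixes x m :: real
  assumes irr: "x \<notin> \<rat>" and m: "m \<ge> 1"
    and approx: "\<And>Q :: int. \<exists>p q :: int. q \<ge> Q \<and> q > 0 \<and>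
      \<bar>x - real_of_int p / real_of_int q\<bar> < real_of_int q powr (- m)"
  shows "ereal m \<le> irrat_exp x"
proof -
  define S where "S = {(p :: int, q :: nat). q > 0 \<and> coprime p (int q) \<and> \<bar>x - p / q\<bar> < q powr (- m)}"
  define f where "f = (\<lambda>(p :: int, q :: nat). \<bar>x - p / q\<bar>)"
  have "infinite S"
  proof
    assume fin: "finite S"
    have "f pq > 0" for pq
    proof -
      have "real_of_int (fst pq) / real (snd pq) \<in> \<rat>" by simp
      then show ?thesis using irr unfolding f_def by (cases pq) auto
    qed
    then have "Min (insert 1 (f ` S)) > 0" using fin by auto
    then obtain p q where pq: "q > 0" "coprime p (int q)" "\<bar>x - p / q\<bar> < q powr (- m)"
      "\<bar>x - p / q\<bar> < Min (insert 1 (f ` S))"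
      by (rule coprime_approximation_within[OF m _ approx])
    then have "(p, q) \<in> S" unfolding S_def by simp
    then have "Min (insert 1 (f ` S)) \<le> f (p, q)" using fin by simp
    with pq(4) show False by (simp add: f_def)
  qed
  then have "ereal m \<in> {ereal m | m. infinite {(p :: int, q :: nat).
      q > 0 \<and> coprime p (int q) \<and> \<bar>x - real_of_int p / real q\<bar> < real q powr (- m)}}"
    unfolding S_def by blast
  then show ?thesis unfolding irrat_exp_def by (rule Sup_upper)
qed

section \<open>Hausdorff measure and dimension\<close>

definition hausdorff_covers :: "real \<Rightarrow> real set \<Rightarrow> (nat \<Rightarrow> real set) set" where
  "hausdorff_covers \<delta> A = {U. A \<subseteq> (\<Union>i. U i) \<and> (\<forall>i. bounded (U i) \<and> diameter (U i) \<le> \<delta>)}"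

lemma hausdorff_pre_covers:
  "hausdorff_pre s \<delta> A = (INF U \<in> hausdorff_covers \<delta> A. (\<Sum>i. ennreal (diameter (U i) powr s)))"
  unfolding hausdorff_pre_def hausdorff_covers_def ..

lemma hausdorff_measure_eq_0_iff:
  "hausdorff_measure s A = 0 \<longleftrightarrow> (\<forall>\<delta>>0. hausdorff_pre s \<delta> A = 0)"
  unfolding hausdorff_measure_def
  using SUP_bot_conv(1)[where 'a = ennreal, unfolded bot_ennreal, of "\<lambda>\<delta>. hausdorff_pre s \<delta> A" "{0<..}"]
  by auto

lemma hausdorff_measure_zero_subset:
  assumes "A \<subseteq> C" "hausdorff_measure s C = 0" shows "hausdorff_measure s A = 0"
proof -
  have "hausdorff_pre s \<delta> A \<le> hausdorff_pre s \<delta> C" for \<delta>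
    unfolding hausdorff_pre_covers
    by (intro INF_superset_mono) (use assms(1) in \<open>auto simp: hausdorff_covers_def\<close>)
  then show ?thesis using assms(2) unfolding hausdorff_measure_eq_0_iff by (metis le_zero_eq)
qed

lemma hausdorff_pre_eq_0I:
  assumes "\<And>e. e > 0 \<Longrightarrow> \<exists>U\<in>hausdorff_covers \<delta> A. (\<Sum>i. ennreal (diameter (U i) powr s)) \<le> ennreal e"
  shows "hausdorff_pre s \<delta> A = 0"
proof -
  have "hausdorff_pre s \<delta> A \<le> 0"
  proof (rule ennreal_le_epsilon)
    fix e :: real assume "0 < e"
    then obtain U where "U \<in> hausdorff_covers \<delta> A" "(\<Sum>i. ennreal (diameter (U i) powr s)) \<le> ennreal e"
      using assms by blast
    then show "hausdorff_pre s \<delta> A \<le> 0 + ennreal e"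
      unfolding hausdorff_pre_covers by (simp add: INF_lower2)
  qed
  then show ?thesis by simp
qed

lemma hausdorff_pre_eq_0D:
  assumes "hausdorff_pre s \<delta> A = 0" "e > 0"
  obtains U where "U \<in> hausdorff_covers \<delta> A" "(\<Sum>i. ennreal (diameter (U i) powr s)) < ennreal e"
proof -
  have "hausdorff_pre s \<delta> A < ennreal e" using assms by simp
  then show ?thesis using that unfolding hausdorff_pre_covers by (auto simp: INF_less_iff)
qed

lemma unit_interval_grid:
  assumes "0 \<le> x" "x \<le> 1" "n > 0"
  obtains i :: nat where "i \<le> n" "real i / n \<le> x" "x \<le> (real i + 1) / n"
proof
  define i where "i = nat \<lfloor>x * n\<rfloor>"
  have "real i = of_int \<lfloor>x * n\<rfloor>" using assms unfolding i_def by simp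
  then have i: "real i \<le> x * n" "x * n < real i + 1"
    using of_int_floor_le[of "x * n"] real_of_int_floor_add_one_gt[of "x * n"] by linarith+
  have "x * n \<le> n" using assms by (simp add: mult_left_le_one_le)
  then show "i \<le> n" unfolding i_def by (simp add: nat_le_iff floor_le_iff)
  show "real i / n \<le> x" "x \<le> (real i + 1) / n" using i assms by (simp_all add: field_simps)
qed

lemma grid_sum_le:
  assumes "real n \<ge> 1" "real n \<ge> 2 / e" "e > 0"
  shows "(\<Sum>i\<le>n. (1 / real n) powr 2) \<le> e"
proof -
  have "(\<Sum>i\<le>n. (1 / real n) powr 2) = (real n + 1) / (real n * real n)"
    using assms(1) by (simp add: powr_numeral power2_eq_square)
  also have "\<dots> \<le> (2 * real n) / (real n * real n)" using assms(1) by (intro divide_right_mono) auto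
  also have "\<dots> = 2 / real n" using assms(1) by simp
  also have "\<dots> \<le> e" using assms by (simp add: field_simps)
  finally show ?thesis .
qed

lemma hausdorff_measure_2_unit_interval:
  assumes "A \<subseteq> {0..1}" shows "hausdorff_measure 2 A = 0"
  unfolding hausdorff_measure_eq_0_iff
proof (intro allI impI hausdorff_pre_eq_0I)
  fix \<delta> e :: real assume d: "\<delta> > 0" and e: "e > 0"
  obtain n :: nat where "1 / \<delta> + 2 / e + 1 \<le> n" using real_arch_simple by blast
  moreover have "1 / \<delta> > 0" "2 / e > 0" using d e by simp_all
  ultimately have n: "n \<ge> 1 / \<delta>" "n \<ge> 2 / e" "real n \<ge> 1" by linarith+
  define U where "U i = (if i \<le> n then {real i / n .. (real i + 1) / n} else {})" for i
  have diam: "diameter (U i) = (if i \<le> n then 1 / n else 0)" for i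
    unfolding U_def using n(3) by (auto simp: field_simps)
  have "U \<in> hausdorff_covers \<delta> A"
    unfolding hausdorff_covers_def
  proof (intro CollectI conjI allI subsetI)
    fix x assume "x \<in> A"
    obtain i where "i \<le> n" "real i / n \<le> x" "x \<le> (real i + 1) / n"
      by (rule unit_interval_grid[of x n]) (use assms \<open>x \<in> A\<close> n(3) in auto)
    then show "x \<in> (\<Union>i. U i)" unfolding U_def by auto
  next
    fix i
    show "bounded (U i)" unfolding U_def by auto
    show "diameter (U i) \<le> \<delta>" unfolding diam using n(1,3) d by (auto simp: field_simps)
  qed
  moreover have "(\<Sum>i. ennreal (diameter (U i) powr 2)) \<le> ennreal e"
  proof -
    have "(\<Sum>i. ennreal (diameter (U i) powr 2)) = (\<Sum>i\<le>n. ennreal (diameter (U i) powr 2))"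
      by (rule suminf_finite) (auto simp: diam)
    also have "\<dots> = (\<Sum>i\<le>n. ennreal ((1 / real n) powr 2))"
      by (intro sum.cong) (auto simp: diam)
    also have "\<dots> = ennreal (\<Sum>i\<le>n. (1 / real n) powr 2)"
      by (rule sum_ennreal) simp
    also have "\<dots> \<le> ennreal e"
      using grid_sum_le[OF n(3,2) e] by (rule ennreal_leI)
    finally show ?thesis .
  qed
  ultimately show "\<exists>U\<in>hausdorff_covers \<delta> A. (\<Sum>i. ennreal (diameter (U i) powr 2)) \<le> ennreal e"
    by blast
qed

lemma diameter_preimage_le:
  fixes f :: "real \<Rightarrow> real"
  assumes U: "bounded U" and "C > 0" "a > 0"
    and H: "\<And>x x'. x \<in> X \<Longrightarrow> x' \<in> X \<Longrightarrow> \<bar>x - x'\<bar> \<le> C * \<bar>f x - f x'\<bar> powr a"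
  shows "diameter (X \<inter> f -` U) \<le> C * diameter U powr a"
proof (rule diameter_le)
  show "X \<inter> f -` U \<noteq> {} \<or> 0 \<le> C * diameter U powr a" using \<open>C > 0\<close> by simp
  fix v v' assume v: "v \<in> X \<inter> f -` U" "v' \<in> X \<inter> f -` U"
  then have "\<bar>f v - f v'\<bar> \<le> diameter U"
    using diameter_bounded_bound[OF U] by (auto simp: dist_real_def)
  then have "C * \<bar>f v - f v'\<bar> powr a \<le> C * diameter U powr a"
    using \<open>C > 0\<close> \<open>a > 0\<close> by (intro mult_left_mono powr_mono2) auto
  moreover have "\<bar>v - v'\<bar> \<le> C * \<bar>f v - f v'\<bar> powr a" using H v by simp
  ultimately show "norm (v - v') \<le> C * diameter U powr a" by simp
qed

lemma preimage_hausdorff_cover: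
  fixes f :: "real \<Rightarrow> real"
  assumes X: "bounded X" and C: "C > 0" and a: "a > 0"
    and H: "\<And>x x'. x \<in> X \<Longrightarrow> x' \<in> X \<Longrightarrow> \<bar>x - x'\<bar> \<le> C * \<bar>f x - f x'\<bar> powr a"
    and U: "U \<in> hausdorff_covers d (f ` X)"
  shows "(\<lambda>i. X \<inter> f -` U i) \<in> hausdorff_covers (C * d powr a) X"
  unfolding hausdorff_covers_def
proof (intro CollectI conjI allI)
  have U': "bounded (U i)" "diameter (U i) \<le> d" "f ` X \<subseteq> (\<Union>i. U i)" for i
    using U unfolding hausdorff_covers_def by auto
  show "X \<subseteq> (\<Union>i. X \<inter> f -` U i)" using U'(3) by blast
  fix i
  show "bounded (X \<inter> f -` U i)" using X by (rule bounded_subset) auto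
  have "diameter (X \<inter> f -` U i) \<le> C * diameter (U i) powr a"
    using H by (rule diameter_preimage_le[OF U'(1) C a])
  also have "\<dots> \<le> C * d powr a"
    using U'(1,2) diameter_ge_0[OF U'(1)] a C by (intro mult_left_mono powr_mono2) auto
  finally show "diameter (X \<inter> f -` U i) \<le> C * d powr a" .
qed

lemma diameter_preimage_powr_le:
  fixes f :: "real \<Rightarrow> real"
  assumes X: "bounded X" and U: "bounded U" and C: "C > 0" and a: "a > 0" and t: "t > 0"
    and H: "\<And>x x'. x \<in> X \<Longrightarrow> x' \<in> X \<Longrightarrow> \<bar>x - x'\<bar> \<le> C * \<bar>f x - f x'\<bar> powr a"
  shows "diameter (X \<inter> f -` U) powr (t / a) \<le> C powr (t / a) * diameter U powr t"
proof -
  have "bounded (X \<inter> f -` U)" using X by (rule bounded_subset) auto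
  moreover have "diameter (X \<inter> f -` U) \<le> C * diameter U powr a"
    using H by (rule diameter_preimage_le[OF U C a])
  ultimately have "diameter (X \<inter> f -` U) powr (t / a) \<le> (C * diameter U powr a) powr (t / a)"
    using diameter_ge_0 a t by (intro powr_mono2) auto
  also have "\<dots> = C powr (t / a) * diameter U powr t"
    using C a diameter_ge_0[OF U] by (simp add: powr_mult powr_powr)
  finally show ?thesis .
qed

lemma hausdorff_measure_zero_inverse_holder:
  fixes f :: "real \<Rightarrow> real"
  assumes X: "bounded X" and C: "C > 0" and a: "0 < a" and t: "t > 0"
    and H: "\<And>x x'. x \<in> X \<Longrightarrow> x' \<in> X \<Longrightarrow> \<bar>x - x'\<bar> \<le> C * \<bar>f x - f x'\<bar> powr a"
    and zero: "hausdorff_measure t (f ` X) = 0"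
  shows "hausdorff_measure (t / a) X = 0"
  unfolding hausdorff_measure_eq_0_iff
proof (intro allI impI hausdorff_pre_eq_0I)
  fix \<delta> e :: real assume d: "\<delta> > 0" and e: "e > 0"
  define d' where "d' = (\<delta> / C) powr (1 / a)"
  define c where "c = C powr (t / a)"
  have d': "d' > 0" "C * d' powr a = \<delta>" unfolding d'_def using d C a by (simp_all add: powr_powr)
  have c: "c > 0" unfolding c_def using C by simp
  obtain U where U: "U \<in> hausdorff_covers d' (f ` X)" "(\<Sum>i. ennreal (diameter (U i) powr t)) < ennreal (e / c)"
  proof (rule hausdorff_pre_eq_0D)
    show "hausdorff_pre t d' (f ` X) = 0" using zero d'(1) unfolding hausdorff_measure_eq_0_iff by simp
    show "e / c > 0" using e c by simp
  qed
  have bounded: "bounded (U i)" for i using U(1) unfolding hausdorff_covers_def by auto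
  have "(\<Sum>i. ennreal (diameter (X \<inter> f -` U i) powr (t / a)))
      \<le> (\<Sum>i. ennreal c * ennreal (diameter (U i) powr t))"
    using diameter_preimage_powr_le[OF X bounded C a t H] c
    by (intro suminf_le) (auto simp: c_def ennreal_mult[symmetric] ennreal_leI)
  also have "\<dots> = ennreal c * (\<Sum>i. ennreal (diameter (U i) powr t))" by simp
  also have "\<dots> \<le> ennreal c * ennreal (e / c)" using U(2) by (intro mult_left_mono) auto
  also have "\<dots> = ennreal e" using c e by (simp flip: ennreal_mult)
  finally show "\<exists>V\<in>hausdorff_covers \<delta> X. (\<Sum>i. ennreal (diameter (V i) powr (t / a))) \<le> ennreal e"
    using preimage_hausdorff_cover[OF X C a H U(1)] d'(2) by auto
qed

lemma hausdorff_dim_eq_if_inverse_holder: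
  assumes "A \<subseteq> F" "F \<subseteq> {0..1}"
    and maps: "\<And>\<epsilon>. 0 < \<epsilon> \<Longrightarrow> \<epsilon> \<le> 1 \<Longrightarrow> \<exists>g C. C > 0 \<and> g ` F \<subseteq> A \<and>
      (\<forall>x\<in>F. \<forall>x'\<in>F. \<bar>x - x'\<bar> \<le> C * \<bar>g x - g x'\<bar> powr (1 / (1 + \<epsilon>)))"
  shows "hausdorff_dim A = hausdorff_dim F"
proof -
  define SA where "SA = {s. s > 0 \<and> hausdorff_measure s A = 0}"
  define SF where "SF = {s. s > 0 \<and> hausdorff_measure s F = 0}"
  have "2 \<in> SF" "2 \<in> SA"
    unfolding SF_def SA_def using hausdorff_measure_2_unit_interval assms(1,2) by auto
  moreover have bdd: "bdd_below SA" "bdd_below SF"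
    unfolding SA_def SF_def by (rule bdd_belowI[of _ 0], simp)+
  moreover have "SF \<subseteq> SA" unfolding SF_def SA_def using hausdorff_measure_zero_subset[OF assms(1)] by auto
  ultimately have le: "Inf SA \<le> Inf SF" by (intro cInf_superset_mono) auto
  have stretch: "s * (1 + \<epsilon>) \<in> SF" if s: "s \<in> SA" and \<epsilon>: "0 < \<epsilon>" "\<epsilon> \<le> 1" for s \<epsilon>
  proof -
    obtain g C where g: "C > 0" "g ` F \<subseteq> A"
      "\<And>x x'. x \<in> F \<Longrightarrow> x' \<in> F \<Longrightarrow> \<bar>x - x'\<bar> \<le> C * \<bar>g x - g x'\<bar> powr (1 / (1 + \<epsilon>))"
      using maps[OF \<epsilon>] by blast
    have "s > 0" "hausdorff_measure s (g ` F) = 0"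
      using s hausdorff_measure_zero_subset[OF g(2)] unfolding SA_def by auto
    moreover have "bounded F" using bounded_subset[OF bounded_closed_interval assms(2)] .
    ultimately have "hausdorff_measure (s / (1 / (1 + \<epsilon>))) F = 0"
      using \<epsilon> by (intro hausdorff_measure_zero_inverse_holder[OF _ g(1) _ _ g(3)]) auto
    then show ?thesis unfolding SF_def using \<open>s > 0\<close> \<epsilon> by simp
  qed
  have "Inf SF \<le> s" if s: "s \<in> SA" for s
  proof (rule field_le_epsilon)
    fix e :: real assume e: "e > 0"
    have "s > 0" using s unfolding SA_def by simp
    define \<epsilon> where "\<epsilon> = min 1 (e / s)"
    have \<epsilon>: "0 < \<epsilon>" "\<epsilon> \<le> 1" "s * \<epsilon> \<le> e"
      unfolding \<epsilon>_def using e \<open>s > 0\<close> by (auto simp: min_def field_simps)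
    have "Inf SF \<le> s * (1 + \<epsilon>)" using cInf_lower[OF stretch[OF s \<epsilon>(1,2)] bdd(2)] .
    also have "\<dots> \<le> s + e" using \<epsilon>(3) by (simp add: algebra_simps)
    finally show "Inf SF \<le> s + e" .
  qed
  then have "Inf SF \<le> Inf SA" using \<open>2 \<in> SA\<close> by (intro cInf_greatest) auto
  then show ?thesis using le unfolding hausdorff_dim_def SA_def SF_def by simp
qed

section \<open>Digits from a finite set\<close>

locale bcf_alphabet =
  fixes B :: "nat set"
  assumes finite_B: "finite B" and card_B: "card B \<ge> 2" and two_in_B: "2 \<in> B"
    and B_ge_2: "\<forall>b\<in>B. b \<ge> 2"
begin

definition max_digit :: nat where "max_digit = Max B"

lemma max_digit_ge: "b \<in> B \<Longrightarrow> b \<le> max_digit"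
  unfolding max_digit_def using finite_B by simp

lemma max_digit_ge_3: "max_digit \<ge> 3"
proof -
  have "\<not> B \<subseteq> {2}"
    using card_mono[of "{2}" B] card_B by fastforce
  then obtain b where "b \<in> B" "b \<noteq> 2" by auto
  then show ?thesis using B_ge_2 max_digit_ge[of b] by fastforce
qed

lemma F_B_memD: "x \<in> F_B B \<Longrightarrow> 0 < x \<and> x < 1 \<and> x \<notin> \<rat>"
  unfolding F_B_def by auto

lemma F_B_digit:
  assumes "x \<in> F_B B" "n \<ge> 1"
  shows "nat (bcf_digit x n) \<in> B" "bcf_digit x n = int (nat (bcf_digit x n))"
    "bcf_digit x n \<le> max_digit"
  using assms B_ge_2 max_digit_ge unfolding F_B_def by force+

lemma F_B_tail_less_max:
  assumes "x \<in> F_B B" "n \<ge> 1" shows "bcf_tail x n < max_digit"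
  using bcf_digit_bounds(2)[of x n] F_B_digit(3)[OF assms] F_B_memD[OF assms(1)] by linarith

lemma F_B_tail_separation:
  assumes x: "x \<in> F_B B" and y: "y \<in> F_B B" and "bcf_digit x N \<noteq> bcf_digit y N"
  shows "\<bar>bcf_tail x N - bcf_tail y N\<bar> \<ge> 1 / max_digit"
proof -
  have gap: "bcf_tail b N - bcf_tail a N > 1 / max_digit"
    if a: "a \<in> F_B B" and b: "b \<in> F_B B" and lt: "bcf_digit a N < bcf_digit b N" for a b
  proof -
    have irr: "a \<notin> \<rat>" "b \<notin> \<rat>" using F_B_memD a b by auto
    have "bcf_tail a (Suc N) < max_digit" "bcf_tail a (Suc N) > 1"
      using F_B_tail_less_max[OF a] bcf_tail_Suc_gt_1[OF irr(1)] by auto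
    then have "1 / max_digit < 1 / bcf_tail a (Suc N)" by (intro divide_strict_left_mono) auto
    then have "bcf_tail a N < bcf_digit a N - 1 / max_digit"
      using bcf_tail_recurrence[OF irr(1), of N] by simp
    moreover have "bcf_tail b N > bcf_digit b N - 1" using bcf_digit_bounds(1)[OF irr(2)] .
    ultimately show ?thesis using lt by linarith
  qed
  show ?thesis
    using gap[OF x y] gap[OF y x] assms(3) by (cases "bcf_digit x N < bcf_digit y N") fastforce+
qed

lemma F_B_diff_le:
  assumes x: "x \<in> F_B B" and x': "x' \<in> F_B B"
    and agree: "\<forall>i. 1 \<le> i \<and> i \<le> n \<longrightarrow> bcf_digit x i = bcf_digit x' i"
  shows "\<bar>x - x'\<bar> \<le> max_digit / (bcf_tail_prod x (Suc n) * bcf_tail_prod x' (Suc n))"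
proof -
  have irr: "x \<notin> \<rat>" "x' \<notin> \<rat>" using F_B_memD x x' by auto
  have "\<bar>bcf_tail x (Suc n) - bcf_tail x' (Suc n)\<bar> \<le> max_digit"
    using F_B_tail_less_max[OF x, of "Suc n"] F_B_tail_less_max[OF x', of "Suc n"]
      bcf_tail_Suc_gt_1[OF irr(1), of n] bcf_tail_Suc_gt_1[OF irr(2), of n] by simp
  moreover have "x - x' = (bcf_tail x (Suc n) - bcf_tail x' (Suc n))
      / (bcf_tail_prod x (Suc n) * bcf_tail_prod x' (Suc n))"
    using agree F_B_memD[OF x] F_B_memD[OF x'] by (intro bcf_diff_common_prefix) auto
  moreover have "bcf_tail_prod x (Suc n) * bcf_tail_prod x' (Suc n) > 0"
    using bcf_tail_prod_pos irr by (simp add: mult_pos_pos)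
  ultimately show ?thesis by (simp add: abs_divide divide_right_mono)
qed

lemma bcf_point_in_F_B:
  assumes "bcf_admissible \<sigma>" "\<forall>n\<ge>1. \<sigma> n \<in> B" shows "bcf_point \<sigma> \<in> F_B B"
  using assms bcf_point_unit_interval bcf_point_not_Rats bcf_digit_bcf_point
  unfolding F_B_def by auto

end

section \<open>Inserting blocks of twos\<close>

definition word_digit :: "nat list \<Rightarrow> nat \<Rightarrow> int" where
  "word_digit w i = (if i = 0 then 1 else if i \<le> length w then int (w ! (i - 1)) else 2)"

definition word_den :: "nat list \<Rightarrow> int" where
  "word_den w = bcf_conv_den (word_digit w) (length w)"

text \<open>After \<open>\<sigma> (n + 1)\<close> a block of \<open>\<lceil>q\<^sup>\<delta>\<rceil>\<close> twos is
  appended, where \<open>q\<close> is the denominator of the word written so far followed by \<open>2, 2, \<dots>\<close>, provided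
  \<open>q\<^sup>\<delta> \<ge> 3\<close> and the product \<open>E\<close> of the factors \<open>L + 1\<close> of all earlier blocks of length \<open>L\<close> is at
  most \<open>q\<^sup>\<delta>\<close>.\<close>

definition block_len :: "real \<Rightarrow> nat list \<Rightarrow> nat \<Rightarrow> nat" where
  "block_len \<delta> w E = (if 3 \<le> word_den w powr \<delta> \<and> E \<le> word_den w powr \<delta>
     then nat \<lceil>word_den w powr \<delta>\<rceil> else 0)"

fun ins_state :: "real \<Rightarrow> (nat \<Rightarrow> nat) \<Rightarrow> nat \<Rightarrow> nat list \<times> nat" where
  "ins_state \<delta> \<sigma> 0 = ([], 1)"
| "ins_state \<delta> \<sigma> (Suc n) =
    (let w = fst (ins_state \<delta> \<sigma> n) @ [\<sigma> (Suc n)]; L = block_len \<delta> w (snd (ins_state \<delta> \<sigma> n))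
     in (w @ replicate L 2, snd (ins_state \<delta> \<sigma> n) * (L + 1)))"

definition ins_word :: "real \<Rightarrow> (nat \<Rightarrow> nat) \<Rightarrow> nat \<Rightarrow> nat list" where
  "ins_word \<delta> \<sigma> n = fst (ins_state \<delta> \<sigma> n)"

definition ins_factor :: "real \<Rightarrow> (nat \<Rightarrow> nat) \<Rightarrow> nat \<Rightarrow> nat" where
  "ins_factor \<delta> \<sigma> n = snd (ins_state \<delta> \<sigma> n)"

definition ins_block :: "real \<Rightarrow> (nat \<Rightarrow> nat) \<Rightarrow> nat \<Rightarrow> nat" where
  "ins_block \<delta> \<sigma> n = block_len \<delta> (ins_word \<delta> \<sigma> n @ [\<sigma> (Suc n)]) (ins_factor \<delta> \<sigma> n)"

definition ins_pos :: "real \<Rightarrow> (nat \<Rightarrow> nat) \<Rightarrow> nat \<Rightarrow> nat" where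
  "ins_pos \<delta> \<sigma> n = length (ins_word \<delta> \<sigma> n)"

text \<open>After \<open>i\<close> steps the word has length at least \<open>i\<close>, so it fixes the \<open>i\<close>-th digit.\<close>

definition ins_digits :: "real \<Rightarrow> (nat \<Rightarrow> nat) \<Rightarrow> nat \<Rightarrow> nat" where
  "ins_digits \<delta> \<sigma> i = (if i = 0 then 1 else ins_word \<delta> \<sigma> i ! (i - 1))"

lemma ins_factor_0: "ins_factor \<delta> \<sigma> 0 = 1"
  and ins_pos_0: "ins_pos \<delta> \<sigma> 0 = 0"
  by (simp_all add: ins_factor_def ins_pos_def ins_word_def)

lemma ins_word_Suc:
  "ins_word \<delta> \<sigma> (Suc n) = ins_word \<delta> \<sigma> n @ [\<sigma> (Suc n)] @ replicate (ins_block \<delta> \<sigma> n) 2"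
  by (simp add: ins_word_def ins_block_def ins_factor_def Let_def)

lemma ins_factor_Suc: "ins_factor \<delta> \<sigma> (Suc n) = ins_factor \<delta> \<sigma> n * (ins_block \<delta> \<sigma> n + 1)"
  by (simp add: ins_word_def ins_block_def ins_factor_def Let_def)

lemma ins_pos_Suc: "ins_pos \<delta> \<sigma> (Suc n) = ins_pos \<delta> \<sigma> n + 1 + ins_block \<delta> \<sigma> n"
  by (simp add: ins_pos_def ins_word_Suc)

lemma ins_pos_ge: "ins_pos \<delta> \<sigma> n \<ge> n"
  by (induction n) (auto simp: ins_pos_Suc ins_pos_0)

lemma ins_state_cong:
  "\<forall>i. 1 \<le> i \<and> i \<le> n \<longrightarrow> \<sigma> i = \<sigma>' i \<Longrightarrow> ins_state \<delta> \<sigma> n = ins_state \<delta> \<sigma>' n"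
  by (induction n) (auto simp: Let_def)

lemma ins_word_prefix: "m \<le> n \<Longrightarrow> \<exists>v. ins_word \<delta> \<sigma> n = ins_word \<delta> \<sigma> m @ v"
  by (induction n rule: dec_induct) (auto simp: ins_word_Suc)

lemma ins_digits_eq_nth:
  assumes "1 \<le> i" "i \<le> ins_pos \<delta> \<sigma> n" shows "ins_digits \<delta> \<sigma> i = ins_word \<delta> \<sigma> n ! (i - 1)"
proof -
  have nth_prefix: "ins_word \<delta> \<sigma> b ! (i - 1) = ins_word \<delta> \<sigma> a ! (i - 1)"
    if "a \<le> b" "i \<le> ins_pos \<delta> \<sigma> a" for a b
    using ins_word_prefix[OF that(1), of \<delta> \<sigma>] that(2) assms(1)
    by (auto simp: ins_pos_def nth_append)
  show ?thesis
  proof (cases "i \<le> n")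
    case True
    then show ?thesis
      unfolding ins_digits_def using nth_prefix[of i n] ins_pos_ge[of i \<delta> \<sigma>] assms by simp
  next
    case False
    then show ?thesis unfolding ins_digits_def using nth_prefix[of n i] assms by simp
  qed
qed

lemma ins_digits_copied: "ins_digits \<delta> \<sigma> (ins_pos \<delta> \<sigma> n + 1) = \<sigma> (Suc n)"
  using ins_digits_eq_nth[of "ins_pos \<delta> \<sigma> n + 1" \<delta> \<sigma> "Suc n"]
  by (simp add: ins_pos_Suc ins_word_Suc ins_pos_def nth_append)

lemma ins_digits_block:
  assumes "ins_pos \<delta> \<sigma> n + 1 < i" "i \<le> ins_pos \<delta> \<sigma> (Suc n)" shows "ins_digits \<delta> \<sigma> i = 2"
proof -
  define j where "j = i - 2 - ins_pos \<delta> \<sigma> n"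
  have "i - 1 = length (ins_word \<delta> \<sigma> n) + Suc j" "j < ins_block \<delta> \<sigma> n"
    using assms unfolding j_def ins_pos_def by (auto simp: ins_pos_Suc[unfolded ins_pos_def])
  then show ?thesis
    using ins_digits_eq_nth[of i \<delta> \<sigma> "Suc n"] assms by (simp add: ins_word_Suc nth_append)
qed

lemma ins_digits_cases:
  assumes "i \<ge> 1"
  obtains "ins_digits \<delta> \<sigma> i = 2" | n where "i = ins_pos \<delta> \<sigma> n + 1" "ins_digits \<delta> \<sigma> i = \<sigma> (Suc n)"
proof -
  define n where "n = (LEAST n. i \<le> ins_pos \<delta> \<sigma> n)"
  have "i \<le> ins_pos \<delta> \<sigma> n"
    unfolding n_def using LeastI[of "\<lambda>n. i \<le> ins_pos \<delta> \<sigma> n", OF ins_pos_ge] .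
  moreover have "n \<noteq> 0" using calculation assms by (cases "n = 0") (auto simp: ins_pos_0)
  then obtain k where k: "n = Suc k" by (cases n) auto
  moreover have "ins_pos \<delta> \<sigma> k < i"
    using not_less_Least[of k "\<lambda>n. i \<le> ins_pos \<delta> \<sigma> n"] k unfolding n_def by simp
  ultimately show ?thesis
    using that ins_digits_copied[of \<delta> \<sigma> k] ins_digits_block[of \<delta> \<sigma> k i]
    by (cases "i = ins_pos \<delta> \<sigma> k + 1") auto
qed

lemma ins_digits_admissible:
  assumes "bcf_admissible \<sigma>" shows "bcf_admissible (ins_digits \<delta> \<sigma>)"
  unfolding bcf_admissible_def
proof (intro conjI allI impI)
  fix i :: nat assume "i \<ge> 1"
  then show "ins_digits \<delta> \<sigma> i \<ge> 2"
    by (rule ins_digits_cases[of i \<delta> \<sigma>]) (use assms in \<open>auto simp: bcf_admissible_def\<close>)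
next
  fix n
  obtain m where m: "m > n" "\<sigma> m \<noteq> 2" using assms unfolding bcf_admissible_def by blast
  then obtain k where "m = Suc k" "k \<ge> n" by (cases m) auto
  then show "\<exists>m>n. ins_digits \<delta> \<sigma> m \<noteq> 2"
    using ins_digits_copied[of \<delta> \<sigma> k] ins_pos_ge[of k \<delta> \<sigma>] m(2)
    by (intro exI[of _ "ins_pos \<delta> \<sigma> k + 1"]) auto
qed

lemma ins_digits_in:
  assumes "\<forall>n\<ge>1. \<sigma> n \<in> B" "2 \<in> B" "i \<ge> 1" shows "ins_digits \<delta> \<sigma> i \<in> B"
  by (rule ins_digits_cases[OF assms(3), of \<delta> \<sigma>]) (use assms in auto)

lemma word_den_eq_conv_den:
  assumes "length w = m" "\<forall>i. 1 \<le> i \<and> i \<le> m \<longrightarrow> \<tau> i = int (w ! (i - 1))"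
  shows "word_den w = bcf_conv_den \<tau> m"
  unfolding word_den_def assms(1) using assms by (intro bcf_conv_den_cong) (auto simp: word_digit_def)

lemma exists_first_difference:
  assumes "\<not> (\<forall>n\<ge>1. f n = g n)"
  obtains n where "\<forall>i. 1 \<le> i \<and> i \<le> n \<longrightarrow> f i = g i" "f (Suc n) \<noteq> g (Suc n)"
proof -
  have "\<exists>n. (\<forall>i. 1 \<le> i \<and> i \<le> n \<longrightarrow> f i = g i) \<and> f (Suc n) \<noteq> g (Suc n)"
  proof (rule ccontr)
    assume none: "\<not> ?thesis"
    have "\<forall>i. 1 \<le> i \<and> i \<le> n \<longrightarrow> f i = g i" for n
      by (induction n) (use none in \<open>auto simp: le_Suc_eq\<close>)
    then show False using assms by auto
  qed
  then show ?thesis using that by blast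
qed

lemma le_if_gap_multiplies:
  fixes a t :: "nat \<Rightarrow> real"
  assumes step: "\<And>m. a m \<ge> t m \<Longrightarrow> a (Suc m) - t (Suc m) \<ge> (a m - t m) * t (Suc m)"
    and t_ge_1: "\<And>m. t m \<ge> 1" and bounded: "\<And>m. a m \<le> C"
    and unbounded: "\<And>k. \<exists>m\<ge>n. (\<Prod>i\<in>{n<..m}. t i) \<ge> 2 ^ k"
  shows "a n \<le> t n"
proof (rule ccontr)
  assume "\<not> ?thesis"
  then have gap: "a n - t n > 0" by simp
  have grow: "a (n + k) - t (n + k) \<ge> (a n - t n) * (\<Prod>i\<in>{n<..n + k}. t i)" for k
  proof (induction k)
    case (Suc k)
    have "(\<Prod>i\<in>{n<..n + k}. t i) \<ge> 1" using t_ge_1 by (intro prod_ge_1) auto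
    then have "a (n + k) \<ge> t (n + k)"
      using Suc gap by (smt (verit) mult_le_cancel_left1)
    then have "a (Suc (n + k)) - t (Suc (n + k)) \<ge> (a (n + k) - t (n + k)) * t (Suc (n + k))"
      by (rule step)
    moreover have "(a (n + k) - t (n + k)) * t (Suc (n + k))
        \<ge> (a n - t n) * (\<Prod>i\<in>{n<..n + k}. t i) * t (Suc (n + k))"
      using Suc t_ge_1[of "Suc (n + k)"] by (intro mult_right_mono) auto
    moreover have "{n<..n + Suc k} = insert (Suc (n + k)) {n<..n + k}" by auto
    then have "(\<Prod>i\<in>{n<..n + Suc k}. t i) = (\<Prod>i\<in>{n<..n + k}. t i) * t (Suc (n + k))"
      by simp
    ultimately show ?case by (simp add: mult.assoc)
  qed simp
  obtain k where k: "C < (a n - t n) * 2 ^ k"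
    using real_arch_pow[of 2 "C / (a n - t n)"] gap by (auto simp: field_simps)
  obtain m where m: "m \<ge> n" "(\<Prod>i\<in>{n<..m}. t i) \<ge> 2 ^ k" using unbounded by blast
  have "a m - t m \<ge> (a n - t n) * (\<Prod>i\<in>{n<..m}. t i)" using grow[of "m - n"] m by simp
  moreover have "(a n - t n) * (\<Prod>i\<in>{n<..m}. t i) \<ge> (a n - t n) * 2 ^ k"
    using m gap by (intro mult_left_mono) auto
  ultimately show False using k bounded[of m] t_ge_1[of m] by linarith
qed

lemma powr_block_factor_le:
  fixes q E P d :: real
  assumes d: "0 < d" "d \<le> 1 / 4" and "3 \<le> q powr d" and E: "0 \<le> E" "E \<le> q powr d"
    and q: "0 < q" "q \<le> 2 * P * E" and "P \<ge> 1"
  shows "E * (nat \<lceil>q powr d\<rceil> + 1) \<le> (2 * P) powr (4 * d)"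
proof -
  define u where "u = q powr d"
  have u: "u \<ge> 3" using assms(3) u_def by simp
  have "real (nat \<lceil>u\<rceil>) + 1 \<le> u + 2" using u by linarith
  then have "E * (nat \<lceil>u\<rceil> + 1) \<le> u * (u + 2)"
    using u E unfolding u_def[symmetric] by (intro mult_mono) auto
  also have "\<dots> \<le> u * (u * u)"
  proof -
    have "3 * u \<le> u * u" using u by (intro mult_right_mono) auto
    then have "u + 2 \<le> u * u" using u by linarith
    then show ?thesis using u by (intro mult_left_mono) auto
  qed
  also have "\<dots> = (q powr (1 - d)) powr (3 * d / (1 - d))"
    unfolding u_def using d q by (simp add: powr_powr flip: powr_add)
  also have "\<dots> \<le> (2 * P) powr (3 * d / (1 - d))"
  proof (rule powr_mono2)
    have "q powr (1 - d) = q / u" unfolding u_def using q by (simp add: powr_diff)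
    also have "\<dots> \<le> 2 * P"
      using q E u \<open>P \<ge> 1\<close> unfolding u_def[symmetric]
      by (simp add: divide_le_eq) (smt (verit) mult_left_mono)
    finally show "q powr (1 - d) \<le> 2 * P" .
  qed (use d in auto)
  also have "\<dots> \<le> (2 * P) powr (4 * d)"
    using d \<open>P \<ge> 1\<close> by (intro powr_mono) (auto simp: field_simps)
  finally show ?thesis unfolding u_def .
qed

lemma holder_from_scales:
  fixes dx dy P K d :: real
  assumes P: "P \<ge> 1" and K: "K \<ge> 1" and d: "0 \<le> d"
    and dx: "dx \<le> K / P" and dy: "dy \<ge> 1 / (4 * K * P powr (1 + 4 * d))"
  shows "dx \<le> 4 * K\<^sup>2 * dy powr (1 / (1 + 4 * d))"
proof -
  define a where "a = 1 / (1 + 4 * d)"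
  have a: "0 < a" "a \<le> 1" unfolding a_def using d by auto
  have "1 / ((4 * K) powr a * P) = (1 / (4 * K * P powr (1 + 4 * d))) powr a"
    using K P d by (simp add: a_def powr_divide powr_mult powr_powr)
  also have "\<dots> \<le> dy powr a"
    using dy K P a by (intro powr_mono2) auto
  finally have h: "1 / ((4 * K) powr a * P) \<le> dy powr a" .
  have ka: "(4 * K) powr a \<le> 4 * K"
    using K a powr_mono[of a 1 "4 * K"] by simp
  have "1 / P = (4 * K) powr a * (1 / ((4 * K) powr a * P))" using K P by simp
  also have "\<dots> \<le> (4 * K) * dy powr a" using h ka K P by (intro mult_mono) auto
  finally have "K * (1 / P) \<le> K * (4 * K * dy powr a)" using K by (intro mult_left_mono) auto
  then show ?thesis using dx unfolding a_def by (simp add: power2_eq_square algebra_simps)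
qed

locale twos_insertion = bcf_alphabet +
  fixes \<delta> :: real
  assumes \<delta>_pos: "0 < \<delta>" and \<delta>_le: "\<delta> \<le> 1 / 4"
begin

definition digits_of :: "real \<Rightarrow> nat \<Rightarrow> nat" where
  "digits_of x n = nat (bcf_digit x n)"

definition ins_map :: "real \<Rightarrow> real" where
  "ins_map x = bcf_point (ins_digits \<delta> (digits_of x))"

abbreviation pos_of :: "real \<Rightarrow> nat \<Rightarrow> nat" where
  "pos_of x \<equiv> ins_pos \<delta> (digits_of x)"

abbreviation block_of :: "real \<Rightarrow> nat \<Rightarrow> nat" where
  "block_of x \<equiv> ins_block \<delta> (digits_of x)"

abbreviation factor_of :: "real \<Rightarrow> nat \<Rightarrow> nat" where
  "factor_of x \<equiv> ins_factor \<delta> (digits_of x)"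

lemma digits_of_admissible:
  assumes "x \<in> F_B B" shows "bcf_admissible (digits_of x)" "\<forall>n\<ge>1. digits_of x n \<in> B"
proof -
  have irr: "x \<notin> \<rat>" using F_B_memD[OF assms] by simp
  have digit: "int (digits_of x n) = bcf_digit x n" if "n \<ge> 1" for n
    using F_B_digit(2)[OF assms that] unfolding digits_of_def by simp
  show "\<forall>n\<ge>1. digits_of x n \<in> B" using F_B_digit(1)[OF assms] unfolding digits_of_def by simp
  show "bcf_admissible (digits_of x)"
    unfolding bcf_admissible_def
  proof (intro conjI allI impI)
    fix n :: nat assume "n \<ge> 1"
    then have "int (digits_of x n) \<ge> 2" using digit bcf_digit_ge_2[OF irr] by simp
    then show "digits_of x n \<ge> 2" by simp
  next
    fix n
    obtain m where "m > n" "bcf_digit x m \<noteq> 2" using bcf_digits_not_eventually_2[OF irr] by blast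
    then show "\<exists>m>n. digits_of x m \<noteq> 2" using digit[of m] by force
  qed
qed

lemma ins_map_in_F_B: "x \<in> F_B B \<Longrightarrow> ins_map x \<in> F_B B"
  unfolding ins_map_def using digits_of_admissible two_in_B
  by (intro bcf_point_in_F_B ins_digits_admissible) (auto intro: ins_digits_in)

lemma ins_map_irrational: "x \<in> F_B B \<Longrightarrow> ins_map x \<notin> \<rat>"
  using F_B_memD[OF ins_map_in_F_B] by blast

lemma bcf_digit_ins_map:
  "x \<in> F_B B \<Longrightarrow> n \<ge> 1 \<Longrightarrow> bcf_digit (ins_map x) n = ins_digits \<delta> (digits_of x) n"
  unfolding ins_map_def using digits_of_admissible by (intro bcf_digit_bcf_point ins_digits_admissible)

lemma bcf_digit_ins_map_copied:
  assumes "x \<in> F_B B" shows "bcf_digit (ins_map x) (pos_of x n + 1) = bcf_digit x (Suc n)"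
  using bcf_digit_ins_map[OF assms] ins_digits_copied F_B_digit(2)[OF assms, of "Suc n"]
  by (simp add: digits_of_def)

lemma bcf_digit_ins_map_block:
  assumes "x \<in> F_B B"
  shows "\<forall>i. pos_of x n + 2 \<le> i \<and> i < pos_of x n + 2 + block_of x n \<longrightarrow> bcf_digit (ins_map x) i = 2"
  using bcf_digit_ins_map[OF assms] ins_digits_block[of \<delta> "digits_of x" n] by (auto simp: ins_pos_Suc)

text \<open>If the copied complete quotient of \<open>ins_map x\<close> exceeded that of \<open>x\<close>, the excess would be
  multiplied by the next complete quotient of \<open>x\<close> at every step (inserted twos only increase
  complete quotients), so it would grow beyond \<open>max_digit\<close>.\<close>

lemma ins_map_tail_le:
  assumes x: "x \<in> F_B B" shows "bcf_tail (ins_map x) (pos_of x n + 1) \<le> bcf_tail x (Suc n)"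
proof -
  let ?y = "ins_map x"
  have irr: "x \<notin> \<rat>" "?y \<notin> \<rat>" using F_B_memD[OF x] ins_map_irrational[OF x] by auto
  let ?a = "\<lambda>m. bcf_tail ?y (pos_of x m + 1)" and ?t = "\<lambda>m. bcf_tail x (Suc m)"
  show ?thesis
  proof (rule le_if_gap_multiplies[where a = ?a and t = ?t and C = max_digit])
    fix m assume ge: "?a m \<ge> ?t m"
    define u where "u = bcf_tail ?y (pos_of x m + 2)"
    have u: "u > 1" "u \<le> ?a (Suc m)"
      using bcf_tail_Suc_gt_1[OF irr(2)] bcf_twos_block_tail_mono[OF irr(2) _ bcf_digit_ins_map_block[OF x, of m]]
      by (auto simp: u_def ins_pos_Suc ac_simps)
    have a: "?a m = bcf_digit x (Suc m) - 1 / u"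
      using bcf_tail_recurrence[OF irr(2), of "pos_of x m + 1"] bcf_digit_ins_map_copied[OF x, of m]
      by (simp add: u_def)
    have t: "?t m = bcf_digit x (Suc m) - 1 / ?t (Suc m)" using bcf_tail_recurrence[OF irr(1)] .
    have t1: "?t (Suc m) > 1" using bcf_tail_Suc_gt_1[OF irr(1)] .
    have "?a m - ?t m = 1 / ?t (Suc m) - 1 / u" using a t by simp
    then have "u - ?t (Suc m) = (?a m - ?t m) * (u * ?t (Suc m))"
      using u t1 by (simp add: field_simps)
    also have "\<dots> \<ge> (?a m - ?t m) * (1 * ?t (Suc m))"
      using ge u t1 by (intro mult_left_mono mult_right_mono) auto
    finally show "?a (Suc m) - ?t (Suc m) \<ge> (?a m - ?t m) * ?t (Suc m)" using u by simp
  next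
    show "?t m \<ge> 1" for m using bcf_tail_Suc_gt_1[OF irr(1)] by (simp add: less_imp_le)
    show "?a m \<le> max_digit" for m
      using F_B_tail_less_max[OF ins_map_in_F_B[OF x]] by (simp add: less_imp_le)
    show "\<exists>m\<ge>n. (\<Prod>i\<in>{n<..m}. ?t i) \<ge> 2 ^ k" for k
    proof -
      obtain m where "m \<ge> Suc n" "(\<Prod>i\<in>{Suc n<..m}. bcf_tail x i) \<ge> 2 ^ k"
        using bcf_tail_prod_unbounded[OF irr(1)] by blast
      moreover from this obtain m' where "m = Suc m'" "m' \<ge> n" by (cases m) auto
      moreover have "(\<Prod>i\<in>{Suc n<..Suc m'}. bcf_tail x i) = (\<Prod>i\<in>{n<..m'}. ?t i)" for m'
        by (simp only: atLeastSucAtMost_greaterThanAtMost[symmetric] prod.shift_bounds_cl_Suc_ivl)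
      ultimately show ?thesis by auto
    qed
  qed
qed

definition ins_den :: "real \<Rightarrow> nat \<Rightarrow> int" where
  "ins_den x n = bcf_conv_den (bcf_digit (ins_map x)) (pos_of x n + 1)"

context
  fixes x assumes x: "x \<in> F_B B"
begin

lemma ins_map_digits_ge_2: "\<forall>i. 1 \<le> i \<and> i \<le> m \<longrightarrow> bcf_digit (ins_map x) i \<ge> 2"
  using bcf_digit_ge_2[OF ins_map_irrational[OF x]] by auto

lemma ins_den_pos: "ins_den x n \<ge> 1"
  unfolding ins_den_def using bcf_den_pair_bounds(1) ins_map_digits_ge_2 by blast

lemma ins_map_tail_prod_le:
  "bcf_tail_prod (ins_map x) (pos_of x n) \<le> bcf_tail_prod x n * factor_of x n"
proof (induction n)
  case (Suc n)
  let ?y = "ins_map x"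
  define p where "p = pos_of x n"
  define L where "L = block_of x n"
  have irr: "x \<notin> \<rat>" "?y \<notin> \<rat>" using F_B_memD[OF x] ins_map_irrational[OF x] by auto
  have nn: "0 \<le> bcf_tail_prod x n * factor_of x n"
    using bcf_tail_prod_ge_1[OF irr(1), of n] by simp
  have "bcf_tail_prod ?y (pos_of x (Suc n))
      = bcf_tail_prod ?y p * bcf_tail ?y (Suc p) * (\<Prod>i\<in>{p + 2..<p + 2 + L}. bcf_tail ?y i)"
    using bcf_tail_prod_add[of ?y "Suc p" L]
    by (simp add: p_def L_def ins_pos_Suc bcf_tail_prod_Suc)
  also have "\<dots> \<le> (bcf_tail_prod x n * factor_of x n) * bcf_tail x (Suc n) * (L + 1)"
  proof (intro mult_mono)
    show "bcf_tail ?y (Suc p) \<le> bcf_tail x (Suc n)" using ins_map_tail_le[OF x] by (simp add: p_def)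
    show "(\<Prod>i\<in>{p + 2..<p + 2 + L}. bcf_tail ?y i) \<le> L + 1"
      using bcf_twos_block_prod_le[OF irr(2) _ bcf_digit_ins_map_block[OF x, of n]] by (simp add: p_def L_def)
    show "0 \<le> (\<Prod>i\<in>{p + 2..<p + 2 + L}. bcf_tail ?y i)"
      by (intro prod_nonneg)
        (auto intro!: less_imp_le[OF order.strict_trans[OF zero_less_one bcf_tail_gt_1[OF irr(2)]]])
    show "0 \<le> bcf_tail_prod x n * factor_of x n * bcf_tail x (Suc n)"
      using nn bcf_tail_Suc_gt_1[OF irr(1), of n] by simp
  qed (use Suc.IH p_def nn bcf_tail_prod_ge_1[OF irr(2)] bcf_tail_Suc_gt_1[OF irr(2), of p] in auto)
  also have "\<dots> = bcf_tail_prod x (Suc n) * factor_of x (Suc n)"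
    by (simp add: L_def bcf_tail_prod_Suc ins_factor_Suc algebra_simps)
  finally show ?case .
qed (simp add: ins_pos_0 ins_factor_0)

lemma ins_map_tail_prod_le_Suc:
  "bcf_tail_prod (ins_map x) (pos_of x n + 1) \<le> bcf_tail_prod x (Suc n) * factor_of x n"
proof -
  have "bcf_tail_prod (ins_map x) (pos_of x n + 1)
      = bcf_tail_prod (ins_map x) (pos_of x n) * bcf_tail (ins_map x) (Suc (pos_of x n))"
    by (simp add: bcf_tail_prod_Suc)
  also have "\<dots> \<le> (bcf_tail_prod x n * factor_of x n) * bcf_tail x (Suc n)"
    using ins_map_tail_prod_le ins_map_tail_le[OF x, of n] bcf_tail_prod_ge_1[OF ins_map_irrational[OF x]]
      bcf_tail_Suc_gt_1[OF ins_map_irrational[OF x], of "pos_of x n"]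
      bcf_tail_prod_ge_1[of x n] F_B_memD[OF x]
    by (intro mult_mono) auto
  finally show ?thesis by (simp add: bcf_tail_prod_Suc algebra_simps)
qed

lemma word_den_ins_map:
  "word_den (ins_word \<delta> (digits_of x) n @ [digits_of x (Suc n)])
    = bcf_conv_den (bcf_digit (ins_map x)) (pos_of x n + 1)"
proof (rule word_den_eq_conv_den)
  let ?w = "ins_word \<delta> (digits_of x) n @ [digits_of x (Suc n)]"
  show "length ?w = pos_of x n + 1" by (simp add: ins_pos_def)
  show "\<forall>i. 1 \<le> i \<and> i \<le> pos_of x n + 1 \<longrightarrow> bcf_digit (ins_map x) i = int (?w ! (i - 1))"
  proof (intro allI impI)
    fix i assume i: "1 \<le> i \<and> i \<le> pos_of x n + 1"
    then have "ins_digits \<delta> (digits_of x) i = ins_word \<delta> (digits_of x) (Suc n) ! (i - 1)"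
      by (intro ins_digits_eq_nth) (auto simp: ins_pos_Suc)
    then show "bcf_digit (ins_map x) i = int (?w ! (i - 1))"
      using i bcf_digit_ins_map[OF x, of i] by (simp add: ins_word_Suc nth_append ins_pos_def)
  qed
qed

lemma ins_block_eq:
  "block_of x n = (if 3 \<le> real_of_int (ins_den x n) powr \<delta> \<and> factor_of x n \<le> real_of_int (ins_den x n) powr \<delta>
     then nat \<lceil>real_of_int (ins_den x n) powr \<delta>\<rceil> else 0)"
  unfolding ins_block_def block_len_def word_den_ins_map ins_den_def ..

lemma ins_den_le_at_block:
  assumes "block_of x n > 0"
  shows "ins_den x n \<le> 2 * bcf_tail_prod x (Suc n) * factor_of x n"
proof -
  let ?y = "ins_map x"
  have irr: "x \<notin> \<rat>" "?y \<notin> \<rat>" using F_B_memD[OF x] ins_map_irrational[OF x] by auto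
  have "bcf_digit ?y (pos_of x n + 2) = 2" using bcf_digit_ins_map_block[OF x, of n] assms by auto
  then have two: "bcf_tail ?y (pos_of x n + 2) \<le> 2"
    using bcf_digit_bounds(2)[OF irr(2), of "pos_of x n + 2"] by simp
  have "ins_den x n \<le> bcf_tail_prod ?y (Suc (pos_of x n + 1))"
    unfolding ins_den_def using bcf_conv_den_le_tail_prod F_B_memD[OF ins_map_in_F_B[OF x]] by blast
  also have "\<dots> = bcf_tail_prod ?y (pos_of x n + 1) * bcf_tail ?y (pos_of x n + 2)"
    by (simp add: bcf_tail_prod_Suc)
  also have "\<dots> \<le> (bcf_tail_prod x (Suc n) * factor_of x n) * 2"
    using ins_map_tail_prod_le_Suc[of n] two bcf_tail_prod_ge_1[OF irr(2)]
      bcf_tail_Suc_gt_1[OF irr(2), of "pos_of x n + 1"] bcf_tail_prod_ge_1[OF irr(1), of "Suc n"]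
    by (intro mult_mono) auto
  finally show ?thesis by simp
qed

lemma ins_factor_le: "factor_of x n \<le> (2 * bcf_tail_prod x n) powr (4 * \<delta>)"
proof (induction n)
  case 0 show ?case using \<delta>_pos by (simp add: ins_factor_0 ge_one_powr_ge_zero)
next
  case (Suc n)
  have irr: "x \<notin> \<rat>" using F_B_memD[OF x] by simp
  define P where "P = bcf_tail_prod x (Suc n)"
  define E where "E = real (factor_of x n)"
  define q where "q = real_of_int (ins_den x n)"
  have P: "P \<ge> 1" "bcf_tail_prod x n \<le> P"
    using bcf_tail_prod_ge_1[OF irr] bcf_tail_prod_mono[OF irr] by (auto simp: P_def)
  have factor: "factor_of x (Suc n) = E * (block_of x n + 1)"
    by (simp add: ins_factor_Suc E_def algebra_simps)
  show ?case
  proof (cases "block_of x n = 0")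
    case True
    have "E \<le> (2 * bcf_tail_prod x n) powr (4 * \<delta>)" using Suc.IH by (simp add: E_def)
    also have "\<dots> \<le> (2 * P) powr (4 * \<delta>)"
      using P bcf_tail_prod_ge_1[OF irr, of n] \<delta>_pos by (intro powr_mono2) auto
    finally have "E \<le> (2 * P) powr (4 * \<delta>)" .
    then show ?thesis using True factor by (simp add: P_def)
  next
    case False
    then have block: "3 \<le> q powr \<delta>" "E \<le> q powr \<delta>" "block_of x n = nat \<lceil>q powr \<delta>\<rceil>"
      using ins_block_eq[of n] unfolding q_def E_def by (auto split: if_splits)
    have "q \<le> 2 * P * E" "q > 0"
      using ins_den_le_at_block[of n] ins_den_pos[of n] False unfolding q_def P_def E_def by auto
    then have "E * (nat \<lceil>q powr \<delta>\<rceil> + 1) \<le> (2 * P) powr (4 * \<delta>)"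
      using powr_block_factor_le[OF \<delta>_pos \<delta>_le block(1) _ block(2)] P(1) by (simp add: E_def)
    then show ?thesis using factor block(3) by (simp add: P_def)
  qed
qed

lemma ins_den_mono: "n \<le> m \<Longrightarrow> ins_den x n \<le> ins_den x m"
proof (induction m rule: dec_induct)
  case (step m)
  have "ins_den x m \<le> ins_den x (Suc m)"
    unfolding ins_den_def using ins_map_digits_ge_2 by (intro bcf_conv_den_mono) (auto simp: ins_pos_Suc)
  with step.IH show ?case by simp
qed simp

lemma ins_den_step:
  assumes "bcf_digit x (Suc (Suc n)) \<ge> 3" shows "ins_den x n + 1 \<le> ins_den x (Suc n)"
proof -
  let ?\<tau> = "bcf_digit (ins_map x)"
  have "ins_den x n \<le> bcf_conv_den ?\<tau> (pos_of x (Suc n))"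
    unfolding ins_den_def using ins_map_digits_ge_2 by (intro bcf_conv_den_mono) (auto simp: ins_pos_Suc)
  moreover have "bcf_conv_den ?\<tau> (pos_of x (Suc n)) + 1 \<le> bcf_conv_den ?\<tau> (Suc (pos_of x (Suc n)))"
    using bcf_conv_den_mono_Suc(2)[of "pos_of x (Suc n)" ?\<tau>] ins_map_digits_ge_2
      bcf_digit_ins_map_copied[OF x, of "Suc n"] assms by auto
  ultimately show ?thesis unfolding ins_den_def by simp
qed

lemma ins_den_unbounded: "\<exists>n. ins_den x n \<ge> k"
proof (induction k rule: int_induct[where k = 1])
  case base
  then show ?case using ins_den_pos by blast
next
  case (step1 k)
  then obtain n where n: "ins_den x n \<ge> k" by blast
  have irr: "x \<notin> \<rat>" using F_B_memD[OF x] by simp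
  obtain m where m: "m > Suc n" "bcf_digit x m \<noteq> 2" using bcf_digits_not_eventually_2[OF irr] by blast
  then obtain j where j: "m = Suc (Suc j)" "j \<ge> n" by (cases m; cases "m - 1") auto
  have "bcf_digit x m \<ge> 3" using bcf_digit_ge_2[OF irr, of m] m by simp
  then have "ins_den x j + 1 \<le> ins_den x (Suc j)" using ins_den_step j by simp
  moreover have "ins_den x n \<le> ins_den x j" using ins_den_mono j by simp
  ultimately show ?case using n by (intro exI[of _ "Suc j"]) simp
next
  case (step2 k)
  then obtain n where "k \<le> ins_den x n" by blast
  then show ?case by (intro exI[of _ n]) simp
qed

text \<open>Once the blocks stop, the factor stays fixed while the denominators grow without bound,
  so the insertion condition holds again.\<close>

lemma ins_block_frequently_pos: "\<exists>n\<ge>n0. block_of x n > 0"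
proof (rule ccontr)
  assume "\<not> ?thesis"
  then have none: "\<forall>n\<ge>n0. block_of x n = 0" by auto
  have const: "factor_of x (n0 + k) = factor_of x n0" for k
    by (induction k) (use none in \<open>auto simp: ins_factor_Suc\<close>)
  define E where "E = real (factor_of x n0)"
  obtain n1 where n1: "ins_den x n1 \<ge> \<lceil>(3 + E) powr (1 / \<delta>)\<rceil>" using ins_den_unbounded by blast
  define n where "n = max n0 n1"
  have "real_of_int (ins_den x n) \<ge> (3 + E) powr (1 / \<delta>)"
    using ins_den_mono[of n1 n] n1 unfolding n_def by linarith
  then have "real_of_int (ins_den x n) powr \<delta> \<ge> ((3 + E) powr (1 / \<delta>)) powr \<delta>"
    using \<delta>_pos by (intro powr_mono2) auto
  also have "((3 + E) powr (1 / \<delta>)) powr \<delta> = 3 + E" using \<delta>_pos by (simp add: powr_powr E_def)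
  finally have big: "real_of_int (ins_den x n) powr \<delta> \<ge> 3 + E" .
  have "factor_of x n = factor_of x n0" using const[of "n - n0"] unfolding n_def by simp
  then have "block_of x n = nat \<lceil>real_of_int (ins_den x n) powr \<delta>\<rceil>"
    using big ins_block_eq by (simp add: E_def)
  moreover have "nat \<lceil>real_of_int (ins_den x n) powr \<delta>\<rceil> > 0" using big E_def by linarith
  ultimately show False using none unfolding n_def by simp
qed

lemma ins_map_approx_at_block:
  assumes "block_of x n > 0"
  shows "\<exists>p :: int. \<bar>ins_map x - p / ins_den x n\<bar> < real_of_int (ins_den x n) powr (- (2 + \<delta>))"
proof -
  let ?y = "ins_map x"
  define m where "m = pos_of x n + 1"
  define q where "q = real_of_int (ins_den x n)"
  define L where "L = block_of x n"
  have q1: "q \<ge> 1" unfolding q_def using ins_den_pos by simp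
  have L: "L = nat \<lceil>q powr \<delta>\<rceil>" "L \<ge> 1"
    using assms ins_block_eq unfolding L_def q_def by (auto split: if_splits)
  have qL: "q powr \<delta> \<le> L" using L by linarith
  have "0 < ?y" "?y < 1" "?y \<notin> \<rat>" using F_B_memD[OF ins_map_in_F_B[OF x]] by auto
  then have "\<bar>?y - bcf_conv_num (bcf_digit ?y) m / q\<bar> \<le> (bcf_tail ?y (Suc m) - 1) / q\<^sup>2"
    unfolding q_def ins_den_def m_def using bcf_conv_approx by simp
  also have "\<dots> < (1 / L) / q\<^sup>2"
    using bcf_twos_block_tail_near_1[OF ins_map_irrational[OF x] L(2)[unfolded L_def]
        bcf_digit_ins_map_block[OF x, of n]] q1
    unfolding m_def L_def by (intro divide_strict_right_mono) (auto simp: add.commute)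
  also have "\<dots> \<le> (1 / q powr \<delta>) / q\<^sup>2"
  proof -
    have "0 < q powr \<delta>" using q1 by simp
    then show ?thesis using qL q1 L(2) by (intro divide_right_mono divide_left_mono mult_pos_pos) auto
  qed
  also have "\<dots> = q powr (- (2 + \<delta>))"
  proof -
    have "q powr (- (2 + \<delta>)) = 1 / q powr (2 + \<delta>)" by (rule powr_minus_divide)
    also have "q powr (2 + \<delta>) = q powr 2 * q powr \<delta>" by (rule powr_add)
    also have "q powr 2 = q\<^sup>2" using q1 by (simp add: powr_numeral)
    finally show ?thesis by simp
  qed
  finally show ?thesis unfolding q_def by blast
qed

lemma ins_map_approximable:
  fixes Q :: int
  shows "\<exists>p q :: int. q \<ge> Q \<and> q > 0 \<and>
    \<bar>ins_map x - real_of_int p / real_of_int q\<bar> < real_of_int q powr (- (2 + \<delta>))"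
proof -
  obtain n1 where n1: "ins_den x n1 \<ge> Q" using ins_den_unbounded by blast
  obtain n where n: "n \<ge> n1" "block_of x n > 0" using ins_block_frequently_pos by blast
  obtain p :: int where "\<bar>ins_map x - p / ins_den x n\<bar> < real_of_int (ins_den x n) powr (- (2 + \<delta>))"
    using ins_map_approx_at_block[OF n(2)] by blast
  then show ?thesis
    using ins_den_mono[OF n(1)] n1 ins_den_pos[of n]
    by (intro exI[of _ p] exI[of _ "ins_den x n"]) auto
qed

lemma irrat_exp_ins_map_gt_2: "irrat_exp (ins_map x) > 2"
proof -
  have "ereal (2 + \<delta>) \<le> irrat_exp (ins_map x)"
    using \<delta>_pos by (intro irrat_exp_ge_if_approximable ins_map_irrational[OF x] ins_map_approximable) auto
  moreover have "(2 :: ereal) < ereal (2 + \<delta>)" using \<delta>_pos by simp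
  ultimately show ?thesis using less_le_trans by blast
qed

end

lemma ins_map_common_prefix:
  assumes x: "x \<in> F_B B" and x': "x' \<in> F_B B"
    and agree: "\<forall>i. 1 \<le> i \<and> i \<le> n \<longrightarrow> bcf_digit x i = bcf_digit x' i"
  shows "pos_of x' n = pos_of x n" "factor_of x' n = factor_of x n"
    and "\<forall>i. 1 \<le> i \<and> i < pos_of x n + 1 \<longrightarrow> bcf_digit (ins_map x) i = bcf_digit (ins_map x') i"
proof -
  have "ins_state \<delta> (digits_of x) n = ins_state \<delta> (digits_of x') n"
    using agree unfolding digits_of_def by (intro ins_state_cong) auto
  then have word: "ins_word \<delta> (digits_of x') n = ins_word \<delta> (digits_of x) n"
    and "factor_of x' n = factor_of x n" by (simp_all add: ins_word_def ins_factor_def)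
  then show pos: "pos_of x' n = pos_of x n" "factor_of x' n = factor_of x n"
    by (simp_all add: ins_pos_def)
  show "\<forall>i. 1 \<le> i \<and> i < pos_of x n + 1 \<longrightarrow> bcf_digit (ins_map x) i = bcf_digit (ins_map x') i"
    using bcf_digit_ins_map[OF x] bcf_digit_ins_map[OF x'] word pos
      ins_digits_eq_nth[of _ \<delta> "digits_of x" n] ins_digits_eq_nth[of _ \<delta> "digits_of x'" n]
    by auto
qed

lemma ins_factor_le_Suc:
  assumes "x \<in> F_B B" shows "factor_of x n \<le> (2 * bcf_tail_prod x (Suc n)) powr (4 * \<delta>)"
proof -
  have irr: "x \<notin> \<rat>" using F_B_memD[OF assms] by simp
  have "factor_of x n \<le> (2 * bcf_tail_prod x n) powr (4 * \<delta>)" by (rule ins_factor_le[OF assms])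
  also have "\<dots> \<le> (2 * bcf_tail_prod x (Suc n)) powr (4 * \<delta>)"
    using bcf_tail_prod_mono[OF irr, of n "Suc n"] bcf_tail_prod_ge_1[OF irr, of n] \<delta>_pos
    by (intro powr_mono2) auto
  finally show ?thesis .
qed

lemma ins_map_tail_prod_pair_le:
  assumes x: "x \<in> F_B B" and x': "x' \<in> F_B B"
    and agree: "\<forall>i. 1 \<le> i \<and> i \<le> n \<longrightarrow> bcf_digit x i = bcf_digit x' i"
  defines "P \<equiv> bcf_tail_prod x (Suc n) * bcf_tail_prod x' (Suc n)"
  shows "bcf_tail_prod (ins_map x) (pos_of x n + 1) * bcf_tail_prod (ins_map x') (pos_of x n + 1)
    \<le> 4 * P powr (1 + 4 * \<delta>)"
proof -
  let ?a = "bcf_tail_prod x (Suc n)" and ?b = "bcf_tail_prod x' (Suc n)"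
  define E where "E = real (factor_of x n)"
  have irr: "x \<notin> \<rat>" "x' \<notin> \<rat>" "ins_map x \<notin> \<rat>" "ins_map x' \<notin> \<rat>"
    using F_B_memD x x' ins_map_irrational by auto
  have ab: "?a \<ge> 1" "?b \<ge> 1" using bcf_tail_prod_ge_1 irr by auto
  note prefix = ins_map_common_prefix[OF x x' agree]
  have E: "E \<ge> 0" "E \<le> (2 * ?a) powr (4 * \<delta>)" "E \<le> (2 * ?b) powr (4 * \<delta>)"
    using ins_factor_le_Suc[OF x, of n] ins_factor_le_Suc[OF x', of n] prefix(2) by (auto simp: E_def)
  have "E * E \<le> (2 * ?a) powr (4 * \<delta>) * (2 * ?b) powr (4 * \<delta>)"
    using E by (intro mult_mono) auto
  also have "\<dots> = 4 powr (4 * \<delta>) * P powr (4 * \<delta>)"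
    using ab by (simp add: P_def powr_mult[symmetric] algebra_simps)
  also have "\<dots> \<le> 4 * P powr (4 * \<delta>)"
    using \<delta>_pos \<delta>_le powr_mono[of "4 * \<delta>" 1 4] by (intro mult_right_mono) auto
  finally have EE: "E * E \<le> 4 * P powr (4 * \<delta>)" .
  have "bcf_tail_prod (ins_map x) (pos_of x n + 1) * bcf_tail_prod (ins_map x') (pos_of x n + 1)
      \<le> (?a * E) * (?b * E)"
    using ins_map_tail_prod_le_Suc[OF x, of n] ins_map_tail_prod_le_Suc[OF x', of n] prefix(1,2)
      bcf_tail_prod_ge_1[OF irr(4), of "pos_of x n + 1"] ab E(1)
    by (intro mult_mono) (auto simp: E_def)
  also have "\<dots> = P * (E * E)" by (simp add: P_def algebra_simps)
  also have "\<dots> \<le> P * (4 * P powr (4 * \<delta>))" using EE ab by (intro mult_left_mono) (auto simp: P_def)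
  also have "\<dots> = 4 * P powr (1 + 4 * \<delta>)" using ab by (simp add: P_def powr_add)
  finally show ?thesis .
qed

lemma ins_map_diff_ge:
  assumes x: "x \<in> F_B B" and x': "x' \<in> F_B B"
    and agree: "\<forall>i. 1 \<le> i \<and> i \<le> n \<longrightarrow> bcf_digit x i = bcf_digit x' i"
    and differ: "bcf_digit x (Suc n) \<noteq> bcf_digit x' (Suc n)"
  defines "P \<equiv> bcf_tail_prod x (Suc n) * bcf_tail_prod x' (Suc n)"
  shows "\<bar>ins_map x - ins_map x'\<bar> \<ge> 1 / (4 * real max_digit * P powr (1 + 4 * \<delta>))"
proof -
  define y where "y = ins_map x"
  define y' where "y' = ins_map x'"
  define p where "p = pos_of x n"
  have F: "y \<in> F_B B" "y' \<in> F_B B" using ins_map_in_F_B x x' by (auto simp: y_def y'_def)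
  have "bcf_digit y (p + 1) \<noteq> bcf_digit y' (p + 1)"
    using bcf_digit_ins_map_copied[OF x, of n] bcf_digit_ins_map_copied[OF x', of n] differ
      ins_map_common_prefix(1)[OF x x' agree] by (simp add: y_def y'_def p_def)
  then have sep: "\<bar>bcf_tail y (p + 1) - bcf_tail y' (p + 1)\<bar> \<ge> 1 / max_digit"
    using F_B_tail_separation[OF F] by simp
  have Py: "bcf_tail_prod y (p + 1) * bcf_tail_prod y' (p + 1) \<le> 4 * P powr (1 + 4 * \<delta>)"
    using ins_map_tail_prod_pair_le[OF x x' agree] by (simp add: y_def y'_def p_def P_def)
  have Py_pos: "bcf_tail_prod y (p + 1) * bcf_tail_prod y' (p + 1) > 0"
    using bcf_tail_prod_pos F_B_memD[OF F(1)] F_B_memD[OF F(2)] by (simp add: mult_pos_pos)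
  have "y - y' = (bcf_tail y (p + 1) - bcf_tail y' (p + 1)) / (bcf_tail_prod y (p + 1) * bcf_tail_prod y' (p + 1))"
    using ins_map_common_prefix(3)[OF x x' agree] F_B_memD[OF F(1)] F_B_memD[OF F(2)]
    by (intro bcf_diff_common_prefix) (auto simp: y_def y'_def p_def)
  then have "\<bar>y - y'\<bar> = \<bar>bcf_tail y (p + 1) - bcf_tail y' (p + 1)\<bar> / (bcf_tail_prod y (p + 1) * bcf_tail_prod y' (p + 1))"
    using Py_pos by (simp add: abs_divide)
  also have "\<dots> \<ge> (1 / max_digit) / (4 * P powr (1 + 4 * \<delta>))"
    using sep Py Py_pos max_digit_ge_3 by (intro frac_le) auto
  finally show ?thesis by (simp add: y_def y'_def field_simps)
qed

lemma ins_map_inverse_holder: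
  assumes x: "x \<in> F_B B" and x': "x' \<in> F_B B"
  shows "\<bar>x - x'\<bar> \<le> 4 * (real max_digit)\<^sup>2 * \<bar>ins_map x - ins_map x'\<bar> powr (1 / (1 + 4 * \<delta>))"
proof (cases "\<forall>n\<ge>1. bcf_digit x n = bcf_digit x' n")
  case True
  then have "x = x'" using F_B_memD[OF x] F_B_memD[OF x'] by (intro bcf_digits_inj) auto
  then show ?thesis by simp
next
  case False
  then obtain n where agree: "\<forall>i. 1 \<le> i \<and> i \<le> n \<longrightarrow> bcf_digit x i = bcf_digit x' i"
    and differ: "bcf_digit x (Suc n) \<noteq> bcf_digit x' (Suc n)"
    using exists_first_difference by blast
  have "1 * 1 \<le> bcf_tail_prod x (Suc n) * bcf_tail_prod x' (Suc n)"
    using bcf_tail_prod_ge_1 bcf_tail_prod_pos F_B_memD[OF x] F_B_memD[OF x']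
    by (intro mult_mono) (auto simp: less_imp_le)
  then show ?thesis
    using holder_from_scales[OF _ _ _ F_B_diff_le[OF x x' agree] ins_map_diff_ge[OF x x' agree differ]]
      max_digit_ge_3 \<delta>_pos by simp
qed

end

theorem corollary1:
  fixes B :: "nat set"
  assumes "finite B" and "card B \<ge> 2" and "2 \<in> B" and "\<forall>b\<in>B. b \<ge> 2"
  shows "hausdorff_dim {x \<in> F_B B. irrat_exp x > 2} = hausdorff_dim (F_B B)"
proof (rule hausdorff_dim_eq_if_inverse_holder)
  interpret bcf_alphabet B using assms by unfold_locales
  fix \<epsilon> :: real assume "0 < \<epsilon>" "\<epsilon> \<le> 1"
  then interpret twos_insertion B "\<epsilon> / 4" by unfold_locales auto
  show "\<exists>g C. C > 0 \<and> g ` F_B B \<subseteq> {x \<in> F_B B. irrat_exp x > 2} \<and>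
      (\<forall>x\<in>F_B B. \<forall>x'\<in>F_B B. \<bar>x - x'\<bar> \<le> C * \<bar>g x - g x'\<bar> powr (1 / (1 + \<epsilon>)))"
    using ins_map_in_F_B irrat_exp_ins_map_gt_2 ins_map_inverse_holder max_digit_ge_3
    by (intro exI[of _ ins_map] exI[of _ "4 * (real max_digit)\<^sup>2"]) auto
qed (auto simp: F_B_def)

end
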